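(* Let $n\ge 2$ be an integer. For $i=1,2$ let $X_{i1},\dots,X_{in}$ be a random sample from the density $\frac{1}{\sigma}e^{-(x-\mu_i)/\sigma}$, $x\ge\mu_i$, the two samples independent, $\underline{\theta}=(\mu_1,\mu_2,\sigma)\in\mathbb{R}^2\times(0,\infty)$. Let $X_i=\min_jX_{ij}$, $S=\sum_{i=1}^2\sum_{j=1}^n(X_{ij}-X_i)$, $Z_1=\min\{X_1,X_2\}$, $Z_2=\max\{X_1,X_2\}$, $W=\frac{Z_2-Z_1}{S}$, $V=\frac{S}{\sigma}$, $\mu_S=\mu_1I(X_1\le X_2)+\mu_2I(X_2<X_1)$, $U_1=\frac{Z_1-\mu_S}{\sigma}$, and $\mu=n(\max\{\mu_1,\mu_2\}-\min\{\mu_1,\mu_2\})/\sigma$. Let $f_{1,\underline{\theta}}$ denote the probability density function of $W$. Then for each fixed $w\in(0,\infty)$, the conditional density of $(U_1,V)$ given $W=w$ is $$f_{4,\underline{\theta}}(u,v\mid w)=\begin{cases}\dfrac{n^2}{\Gamma(2(n-1))f_{1,\underline{\theta}}(w)}v^{2n-2}e^{-v(1+nw)}e^{-2nu}\left(e^{-\mu}+e^{\mu}\right), & \text{if } 0<u<\tfrac{\mu}{n},\ \tfrac{\mu-nu}{nw}<v<\infty,\ \text{or } \tfrac{\mu}{n}<u<\infty,\ 0<v<\infty,\\[2mm] \dfrac{n^2}{\Gamma(2(n-1))f_{1,\underline{\theta}}(w)}v^{2n-2}e^{-v(1+nw)}e^{-2nu}e^{-\mu}, & \text{if } 0<u<\tfrac{\mu}{n},\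 0<v<\tfrac{\mu-nu}{nw},\end{cases}$$ and $0$ otherwise.
   Context: $I(A)$ is the indicator of $A$; $\Gamma$ is the gamma function. *)

theory Defs
  imports "HOL-Probability.Probability"
begin

definition shifted_exp_density :: "real \<Rightarrow> real \<Rightarrow> real \<Rightarrow> real" where
  "shifted_exp_density m s x = (if x \<ge> m then exp (-(x - m) / s) / s else 0)"

definition conditional_density ::
  "'a measure \<Rightarrow> ('a \<Rightarrow> 'b::euclidean_space) \<Rightarrow> ('a \<Rightarrow> real) \<Rightarrow> (real \<Rightarrow> real)
    \<Rightarrow> ('b \<Rightarrow> real \<Rightarrow> real) \<Rightarrow> bool" where
  "conditional_density M Y W fW g \<longleftrightarrow>
     distributed M lborel (\<lambda>\<omega>. (Y \<omega>, W \<omega>)) (\<lambda>(y, w). ennreal (g y w * fW w))"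

definition f4 :: "nat \<Rightarrow> real \<Rightarrow> (real \<Rightarrow> real) \<Rightarrow> real \<Rightarrow> real \<Rightarrow> real \<Rightarrow> real" where
  "f4 n mu f1 u v w =
    (if w > 0 then
       (let c = real n ^ 2 / (Gamma (2 * (real n - 1)) * f1 w) * v ^ (2 * n - 2)
                * exp (- v * (1 + real n * w)) * exp (- 2 * real n * u)
        in if (0 < u \<and> u < mu / real n \<and> (mu - real n * u) / (real n * w) < v)
              \<or> (mu / real n < u \<and> 0 < v)
           then c * (exp (- mu) + exp mu)
           else if 0 < u \<and> u < mu / real n \<and> 0 < v \<and> v < (mu - real n * u) / (real n * w)
           then c * exp (- mu)
           else 0)
     else 0)"

end

theory Submission
  imports Defs
begin

text \<open>
  For one sample of size \<open>n\<close> from the exponential law with rate \<open>r\<close> located at \<open>\<mu>\<close>, the minimum is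
  exponential with rate \<open>n r\<close> located at \<open>\<mu>\<close> and is independent of the sum of the spacings
  \<open>X\<^sub>j - min X\<close>, which is Erlang with \<open>n - 1\<close> phases. This follows by induction on the sample,
  adding one observation at a time and using memorylessness on the two sides of the current minimum.
  Hence \<open>(X\<^sub>1, X\<^sub>2, S)\<close> has the product density of two shifted exponentials and an Erlang law with
  \<open>2n - 2\<close> phases. On each of the events \<open>X\<^sub>1 \<le> X\<^sub>2\<close> and \<open>X\<^sub>2 < X\<^sub>1\<close> the map to
  \<open>(U\<^sub>1, V, W)\<close> is a change of variables with Jacobian \<open>\<sigma>\<^sup>3 v\<close>. The two transformed densities
  carry the factors \<open>exp \<mu>\<close> and \<open>exp (- \<mu>)\<close> on overlapping regions, and their sum is the joint
  density of \<open>(U\<^sub>1, V, W)\<close>. Dividing by the density of \<open>W\<close> gives the claim.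
\<close>

section \<open>Iterated integrals, densities and independence\<close>

lemma nn_integral_add_3:
  fixes f g :: "real \<times> real \<times> real \<Rightarrow> ennreal"
  assumes [measurable]: "f \<in> borel_measurable (borel \<Otimes>\<^sub>M borel \<Otimes>\<^sub>M borel)" "g \<in> borel_measurable (borel \<Otimes>\<^sub>M borel \<Otimes>\<^sub>M borel)"
  shows "(\<integral>\<^sup>+x. \<integral>\<^sup>+y. \<integral>\<^sup>+z. f (x, y, z) + g (x, y, z) \<partial>lborel \<partial>lborel \<partial>lborel) =
    (\<integral>\<^sup>+x. \<integral>\<^sup>+y. \<integral>\<^sup>+z. f (x, y, z) \<partial>lborel \<partial>lborel \<partial>lborel) + (\<integral>\<^sup>+x. \<integral>\<^sup>+y. \<integral>\<^sup>+z. g (x, y, z) \<partial>lborel \<partial>lborel \<partial>lborel)"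
proof -
  have "(\<integral>\<^sup>+x. \<integral>\<^sup>+y. \<integral>\<^sup>+z. f (x, y, z) + g (x, y, z) \<partial>lborel \<partial>lborel \<partial>lborel) =
      (\<integral>\<^sup>+x. \<integral>\<^sup>+y. (\<integral>\<^sup>+z. f (x, y, z) \<partial>lborel) + (\<integral>\<^sup>+z. g (x, y, z) \<partial>lborel) \<partial>lborel \<partial>lborel)"
    by (intro nn_integral_cong nn_integral_add) measurable
  also have "\<dots> = (\<integral>\<^sup>+x. (\<integral>\<^sup>+y. \<integral>\<^sup>+z. f (x, y, z) \<partial>lborel \<partial>lborel) + (\<integral>\<^sup>+y. \<integral>\<^sup>+z. g (x, y, z) \<partial>lborel \<partial>lborel) \<partial>lborel)"
    by (intro nn_integral_cong nn_integral_add) measurable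
  also have "\<dots> = (\<integral>\<^sup>+x. \<integral>\<^sup>+y. \<integral>\<^sup>+z. f (x, y, z) \<partial>lborel \<partial>lborel \<partial>lborel) +
      (\<integral>\<^sup>+x. \<integral>\<^sup>+y. \<integral>\<^sup>+z. g (x, y, z) \<partial>lborel \<partial>lborel \<partial>lborel)"
    by (intro nn_integral_add) measurable
  finally show ?thesis .
qed

lemma nn_integral_cong_AE_3:
  fixes f g :: "real \<Rightarrow> real \<Rightarrow> real \<Rightarrow> ennreal"
  assumes "AE u in lborel. AE v in lborel. AE w in lborel. f u v w = g u v w"
  shows "(\<integral>\<^sup>+u. \<integral>\<^sup>+v. \<integral>\<^sup>+w. f u v w \<partial>lborel \<partial>lborel \<partial>lborel) =
    (\<integral>\<^sup>+u. \<integral>\<^sup>+v. \<integral>\<^sup>+w. g u v w \<partial>lborel \<partial>lborel \<partial>lborel)"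
  using assms by (auto intro!: nn_integral_cong_AE elim!: eventually_mono)

lemma nn_integral_lborel_triple:
  fixes f :: "(real \<times> real) \<times> real \<Rightarrow> ennreal"
  assumes [measurable]: "f \<in> borel_measurable borel"
  shows "(\<integral>\<^sup>+z. f z \<partial>lborel) = (\<integral>\<^sup>+u. \<integral>\<^sup>+v. \<integral>\<^sup>+w. f ((u, v), w) \<partial>lborel \<partial>lborel \<partial>lborel)"
proof -
  have "(\<integral>\<^sup>+z. f z \<partial>lborel) = (\<integral>\<^sup>+z. f z \<partial>(lborel \<Otimes>\<^sub>M lborel))"
    by (simp only: lborel_prod)
  also have "\<dots> = (\<integral>\<^sup>+x. \<integral>\<^sup>+w. f (x, w) \<partial>lborel \<partial>lborel)"
    by (rule lborel.nn_integral_fst[symmetric]) (simp only: lborel_prod, measurable)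
  also have "\<dots> = (\<integral>\<^sup>+x. \<integral>\<^sup>+w. f (x, w) \<partial>lborel \<partial>(lborel \<Otimes>\<^sub>M lborel))"
    by (simp only: lborel_prod)
  also have "\<dots> = (\<integral>\<^sup>+u. \<integral>\<^sup>+v. \<integral>\<^sup>+w. f ((u, v), w) \<partial>lborel \<partial>lborel \<partial>lborel)"
    by (rule lborel.nn_integral_fst[symmetric]) (simp only: lborel_prod, measurable)
  finally show ?thesis .
qed

lemma nn_integral_shift_shear_substitution:
  fixes F :: "real \<times> real \<Rightarrow> ennreal"
  assumes \<sigma>: "0 < \<sigma>" and s: "0 < s" and [measurable]: "F \<in> borel_measurable (borel \<Otimes>\<^sub>M borel)"
  shows "(\<integral>\<^sup>+x. \<integral>\<^sup>+y. F (x, y) \<partial>lborel \<partial>lborel) =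
    ennreal (\<sigma> * s) * (\<integral>\<^sup>+u. \<integral>\<^sup>+w. F (a + \<sigma> * u, a + \<sigma> * u + s * w) \<partial>lborel \<partial>lborel)"
proof -
  have "(\<integral>\<^sup>+y. F (x, y) \<partial>lborel) = ennreal s * (\<integral>\<^sup>+w. F (x, x + s * w) \<partial>lborel)" for x
    using nn_integral_real_affine[of "\<lambda>y. F (x, y)" s x] s by simp
  then have "(\<integral>\<^sup>+x. \<integral>\<^sup>+y. F (x, y) \<partial>lborel \<partial>lborel) = ennreal s * (\<integral>\<^sup>+x. \<integral>\<^sup>+w. F (x, x + s * w) \<partial>lborel \<partial>lborel)"
    by (simp add: nn_integral_cmult)
  also have "(\<integral>\<^sup>+x. \<integral>\<^sup>+w. F (x, x + s * w) \<partial>lborel \<partial>lborel) =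
      ennreal \<sigma> * (\<integral>\<^sup>+u. \<integral>\<^sup>+w. F (a + \<sigma> * u, a + \<sigma> * u + s * w) \<partial>lborel \<partial>lborel)"
    using nn_integral_real_affine[of "\<lambda>x. \<integral>\<^sup>+w. F (x, x + s * w) \<partial>lborel" \<sigma> a] \<sigma> by simp
  finally show ?thesis
    using \<sigma> s by (simp add: ennreal_mult mult_ac)
qed

lemma nn_integral_scale_shift_substitution:
  fixes F :: "real \<times> real \<times> real \<Rightarrow> ennreal"
  assumes \<sigma>: "0 < \<sigma>" and [measurable]: "F \<in> borel_measurable (borel \<Otimes>\<^sub>M borel \<Otimes>\<^sub>M borel)"
  shows "(\<integral>\<^sup>+ma. \<integral>\<^sup>+mb. \<integral>\<^sup>+s. indicator {0<..} s * F (s, ma, mb) \<partial>lborel \<partial>lborel \<partial>lborel) =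
    (\<integral>\<^sup>+u. \<integral>\<^sup>+v. \<integral>\<^sup>+w. ennreal (\<sigma> ^ 3 * v) * indicator {0<..} v * F (\<sigma> * v, a + \<sigma> * u, a + \<sigma> * u + \<sigma> * v * w)
      \<partial>lborel \<partial>lborel \<partial>lborel)"
proof -
  let ?I = "\<lambda>s. \<integral>\<^sup>+u. \<integral>\<^sup>+w. F (s, a + \<sigma> * u, a + \<sigma> * u + s * w) \<partial>lborel \<partial>lborel"
  have inner: "indicator {0<..} s * (\<integral>\<^sup>+ma. \<integral>\<^sup>+mb. F (s, ma, mb) \<partial>lborel \<partial>lborel) =
      indicator {0<..} s * (ennreal (\<sigma> * s) * ?I s)" for s
    using nn_integral_shift_shear_substitution[OF \<sigma>, of s "\<lambda>(ma, mb). F (s, ma, mb)" a]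
    by (cases "0 < s") simp_all
  have outer: "ennreal \<sigma> * (indicator {0<..} (\<sigma> * v) * (ennreal (\<sigma> * (\<sigma> * v)) * ?I (\<sigma> * v))) =
      (\<integral>\<^sup>+u. \<integral>\<^sup>+w. ennreal (\<sigma> ^ 3 * v) * indicator {0<..} v * F (\<sigma> * v, a + \<sigma> * u, a + \<sigma> * u + \<sigma> * v * w)
        \<partial>lborel \<partial>lborel)" for v
  proof (cases "0 < v")
    case True
    have "ennreal \<sigma> * ennreal (\<sigma> * (\<sigma> * v)) = ennreal (\<sigma> ^ 3 * v)"
      using \<sigma> True by (simp flip: ennreal_mult add: power3_eq_cube mult_ac)
    moreover have "(\<integral>\<^sup>+u. \<integral>\<^sup>+w. ennreal (\<sigma> ^ 3 * v) * indicator {0<..} v *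
        F (\<sigma> * v, a + \<sigma> * u, a + \<sigma> * u + \<sigma> * v * w) \<partial>lborel \<partial>lborel) = ennreal (\<sigma> ^ 3 * v) * ?I (\<sigma> * v)"
      using True by (simp add: nn_integral_cmult)
    ultimately show ?thesis
      using \<sigma> True by (simp add: mult.assoc[symmetric])
  qed (use \<sigma> in \<open>simp add: zero_less_mult_iff\<close>)
  have "(\<integral>\<^sup>+ma. \<integral>\<^sup>+mb. \<integral>\<^sup>+s. indicator {0<..} s * F (s, ma, mb) \<partial>lborel \<partial>lborel \<partial>lborel) =
      (\<integral>\<^sup>+s. \<integral>\<^sup>+ma. \<integral>\<^sup>+mb. indicator {0<..} s * F (s, ma, mb) \<partial>lborel \<partial>lborel \<partial>lborel)"
    by (subst lborel_pair.Fubini', measurable, intro nn_integral_cong lborel_pair.Fubini', measurable)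
  also have "\<dots> = (\<integral>\<^sup>+s. indicator {0<..} s * (ennreal (\<sigma> * s) * ?I s) \<partial>lborel)"
    by (simp add: nn_integral_cmult inner)
  also have "\<dots> = ennreal \<sigma> * (\<integral>\<^sup>+v. indicator {0<..} (\<sigma> * v) * (ennreal (\<sigma> * (\<sigma> * v)) * ?I (\<sigma> * v)) \<partial>lborel)"
    using nn_integral_real_affine[of "\<lambda>s. indicator {0<..} s * (ennreal (\<sigma> * s) * ?I s)" \<sigma> 0] \<sigma> by simp
  also have "\<dots> = (\<integral>\<^sup>+v. \<integral>\<^sup>+u. \<integral>\<^sup>+w. ennreal (\<sigma> ^ 3 * v) * indicator {0<..} v *
      F (\<sigma> * v, a + \<sigma> * u, a + \<sigma> * u + \<sigma> * v * w) \<partial>lborel \<partial>lborel \<partial>lborel)"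
    unfolding outer[symmetric] by (rule nn_integral_cmult[symmetric]) measurable
  also have "\<dots> = (\<integral>\<^sup>+u. \<integral>\<^sup>+v. \<integral>\<^sup>+w. ennreal (\<sigma> ^ 3 * v) * indicator {0<..} v *
      F (\<sigma> * v, a + \<sigma> * u, a + \<sigma> * u + \<sigma> * v * w) \<partial>lborel \<partial>lborel \<partial>lborel)"
    by (rule lborel_pair.Fubini') measurable
  finally show ?thesis .
qed

lemma pred_mem_interval_measurable[measurable]:
  fixes f g :: "'a \<Rightarrow> real"
  assumes [measurable]: "f \<in> borel_measurable M" "g \<in> borel_measurable M"
  shows "Measurable.pred M (\<lambda>x. f x \<in> {..<g x})" "Measurable.pred M (\<lambda>x. f x \<in> {g x<..})"
    "Measurable.pred M (\<lambda>x. f x \<in> {g x..})"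
  by simp_all measurable

lemma (in prob_space) nn_integral_indep_vars_PiM:
  fixes X :: "'i \<Rightarrow> 'a \<Rightarrow> real" and d :: "'i \<Rightarrow> real \<Rightarrow> ennreal"
  assumes "I \<noteq> {}" and indep: "indep_vars (\<lambda>_. borel) X I"
    and distributed: "\<And>i. i \<in> I \<Longrightarrow> distributed M lborel (X i) (d i)"
    and [measurable]: "\<Phi> \<in> borel_measurable (PiM I (\<lambda>i. density lborel (d i)))"
  shows "(\<integral>\<^sup>+\<omega>. \<Phi> (\<lambda>i\<in>I. X i \<omega>) \<partial>M) = (\<integral>\<^sup>+x. \<Phi> x \<partial>PiM I (\<lambda>i. density lborel (d i)))"
proof -
  let ?T = "\<lambda>\<omega>. \<lambda>i\<in>I. X i \<omega>"
  have X: "X i \<in> borel_measurable M" "distr M borel (X i) = density lborel (d i)" if "i \<in> I" for i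
    using distributed_measurable[OF distributed[OF that]] distributed_distr_eq_density[OF distributed[OF that]]
    by (simp_all add: distr_def)
  have T: "?T \<in> M \<rightarrow>\<^sub>M PiM I (\<lambda>i. density lborel (d i))"
    using X by (intro measurable_restrict) simp
  have "distr M (PiM I (\<lambda>i. density lborel (d i))) ?T = distr M (PiM I (\<lambda>_. borel)) ?T"
    by (intro distr_cong sets_PiM_cong) auto
  also have "\<dots> = PiM I (\<lambda>i. distr M borel (X i))"
    using indep_vars_iff_distr_eq_PiM'[where M' = "\<lambda>_. borel" and X = X and I = I] assms(1) indep X by simp
  also have "\<dots> = PiM I (\<lambda>i. density lborel (d i))"
    using X by (intro PiM_cong) simp_all
  finally have "distr M (PiM I (\<lambda>i. density lborel (d i))) ?T = PiM I (\<lambda>i. density lborel (d i))" .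
  with nn_integral_distr[OF T, of \<Phi>] show ?thesis
    by simp
qed

lemma distributedI_nn_integral:
  fixes F :: "'a \<Rightarrow> 'b::euclidean_space"
  assumes [measurable]: "F \<in> borel_measurable M" "f \<in> borel_measurable borel"
    and integral: "\<And>A. A \<in> sets borel \<Longrightarrow> (\<integral>\<^sup>+\<omega>. indicator A (F \<omega>) \<partial>M) = (\<integral>\<^sup>+z. f z * indicator A z \<partial>lborel)"
  shows "distributed M lborel F f"
  unfolding distributed_def
proof (intro conjI)
  show "distr M lborel F = density lborel f"
  proof (rule measure_eqI)
    fix A
    assume "A \<in> sets (distr M lborel F)"
    then have [measurable]: "A \<in> sets borel"
      by simp
    have "emeasure (distr M lborel F) A = (\<integral>\<^sup>+\<omega>. indicator A (F \<omega>) \<partial>M)"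
      by (simp flip: nn_integral_indicator add: nn_integral_distr)
    also have "\<dots> = emeasure (density lborel f) A"
      by (simp add: integral emeasure_density)
    finally show "emeasure (distr M lborel F) A = emeasure (density lborel f) A" .
  qed simp
qed simp_all

lemma distributed_joint_density_restrict:
  fixes Y :: "'a \<Rightarrow> 'b::euclidean_space" and W :: "'a \<Rightarrow> real"
  assumes joint: "distributed M lborel (\<lambda>\<omega>. (Y \<omega>, W \<omega>)) g" and marginal: "distributed M lborel W f"
  shows "distributed M lborel (\<lambda>\<omega>. (Y \<omega>, W \<omega>)) (\<lambda>z. if f (snd z) = 0 then 0 else g z)"
proof -
  let ?N = "{z :: 'b \<times> real. f (snd z) = 0}"
  note [measurable] = distributed_borel_measurable[OF joint] distributed_borel_measurable[OF marginal]
    distributed_measurable[OF joint] distributed_measurable[OF marginal]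
  have N[measurable]: "?N \<in> sets borel"
  proof -
    have "Measurable.pred (borel \<Otimes>\<^sub>M borel) (\<lambda>z :: 'b \<times> real. f (snd z) = 0)"
      by measurable
    then show ?thesis
      by (simp add: borel_prod pred_def)
  qed
  have "(\<integral>\<^sup>+z. g z * indicator ?N z \<partial>lborel) = emeasure (distr M lborel (\<lambda>\<omega>. (Y \<omega>, W \<omega>))) ?N"
    by (simp add: distributed_distr_eq_density[OF joint] emeasure_density)
  also have "\<dots> = (\<integral>\<^sup>+\<omega>. indicator ?N (Y \<omega>, W \<omega>) \<partial>M)"
    using nn_integral_distr[OF distributed_measurable[OF joint], of "indicator ?N"] by (simp flip: nn_integral_indicator)
  also have "\<dots> = (\<integral>\<^sup>+\<omega>. indicator {w. f w = 0} (W \<omega>) \<partial>M)"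
    by (intro nn_integral_cong) (simp split: split_indicator)
  also have "\<dots> = emeasure (distr M lborel W) {w. f w = 0}"
    using nn_integral_distr[OF distributed_measurable[OF marginal], of "indicator {w. f w = 0}"]
    by (simp flip: nn_integral_indicator)
  also have "\<dots> = (\<integral>\<^sup>+w. f w * indicator {w. f w = 0} w \<partial>lborel)"
    by (simp add: distributed_distr_eq_density[OF marginal] emeasure_density)
  also have "\<dots> = 0"
    by (simp add: nn_integral_0_iff_AE split: split_indicator)
  finally have "AE z in lborel. g z * indicator ?N z = 0"
    by (simp add: nn_integral_0_iff_AE)
  then have "AE z in lborel. g z = (if f (snd z) = 0 then 0 else g z)"
    by eventually_elim (auto simp: indicator_def)
  moreover have restricted: "(\<lambda>z. if f (snd z) = 0 then 0 else g z) \<in> borel_measurable borel"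
    using N by (intro measurable_If) simp_all
  ultimately have "density lborel g = density lborel (\<lambda>z. if f (snd z) = 0 then 0 else g z)"
    by (intro density_cong) simp_all
  with joint restricted show ?thesis
    by (simp add: distributed_def)
qed

section \<open>Exponential and Erlang densities\<close>

lemma exponential_density_rate_add:
  fixes a b x :: real
  shows "exponential_density a x * exp (- (b * x)) + exponential_density b x * exp (- (a * x)) =
    exponential_density (a + b) x"
proof (cases "x < 0")
  case False
  have "exp (- x * (a + b)) = exp (- x * a) * exp (- (b * x))"
    by (simp add: distrib_left mult.commute flip: exp_add)
  moreover have "exp (- x * b) * exp (- (a * x)) = exp (- x * a) * exp (- (b * x))"
    by (simp add: mult.commute)
  ultimately show ?thesis
    using False by (simp add: exponential_density_def distrib_right)
qed (simp add: exponential_density_def)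

lemma nn_integral_exponential_tail:
  fixes h :: "real \<Rightarrow> ennreal"
  assumes r: "0 < r" and c: "0 < c" and a: "\<mu> \<le> a" and [measurable]: "h \<in> borel_measurable borel"
  shows "(\<integral>\<^sup>+y. ennreal (exponential_density (c * r) (y - \<mu>)) * indicator {a<..} y * h (c * (y - a)) \<partial>lborel) =
    ennreal (exp (- (c * r * (a - \<mu>)))) * (\<integral>\<^sup>+z. ennreal (exponential_density r z) * h z \<partial>lborel)"
proof -
  let ?E = "exp (- (c * r * (a - \<mu>)))"
  have density_shift: "exponential_density (c * r) (a + z / c - \<mu>) = c * ?E * exponential_density r z"
    if "0 < z" for z
  proof -
    have arg: "- (a + z / c - \<mu>) * (c * r) = - (c * r * (a - \<mu>)) + - z * r"
      using c by (simp add: field_simps)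
    have "0 < z / c"
      using c that by simp
    then have "\<not> a + z / c - \<mu> < 0"
      using a by simp
    then have "exponential_density (c * r) (a + z / c - \<mu>) = c * r * exp (- (c * r * (a - \<mu>)) + - z * r)"
      by (simp only: exponential_density_def arg if_False simp_thms)
    also have "\<dots> = c * ?E * exponential_density r z"
      using that by (unfold exp_add) (simp add: exponential_density_def)
    finally show ?thesis .
  qed
  have integrand: "(\<lambda>y. ennreal (exponential_density (c * r) (y - \<mu>)) * indicator {a<..} y * h (c * (y - a)))
    \<in> borel_measurable borel"
    by measurable
  have "(\<integral>\<^sup>+y. ennreal (exponential_density (c * r) (y - \<mu>)) * indicator {a<..} y * h (c * (y - a)) \<partial>lborel) =
    ennreal (1 / c) * (\<integral>\<^sup>+z. ennreal (exponential_density (c * r) (a + 1 / c * z - \<mu>)) *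
      indicator {a<..} (a + 1 / c * z) * h (c * (a + 1 / c * z - a)) \<partial>lborel)"
    using nn_integral_real_affine[OF integrand, of "1 / c" a] c by simp
  also have "\<dots> = ennreal (1 / c) * (\<integral>\<^sup>+z. ennreal (c * ?E) * (ennreal (exponential_density r z) * h z) \<partial>lborel)"
  proof (intro arg_cong2[where f = "(*)"] refl nn_integral_cong_AE)
    show "AE z in lborel. ennreal (exponential_density (c * r) (a + 1 / c * z - \<mu>)) *
        indicator {a<..} (a + 1 / c * z) * h (c * (a + 1 / c * z - a)) =
      ennreal (c * ?E) * (ennreal (exponential_density r z) * h z)"
      using AE_lborel_singleton[of 0]
    proof eventually_elim
      case (elim z)
      show ?case
      proof (cases "0 < z")
        case True
        then show ?thesis
          using c r by (simp add: density_shift ennreal_mult' ac_simps)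
      next
        case False
        then have "z < 0" "z / c < 0"
          using elim c by (auto simp: divide_neg_pos)
        then show ?thesis
          by (simp add: exponential_density_def)
      qed
    qed
  qed
  also have "\<dots> = ennreal (1 / c) * ennreal (c * ?E) * (\<integral>\<^sup>+z. ennreal (exponential_density r z) * h z \<partial>lborel)"
    by (simp add: nn_integral_cmult mult.assoc)
  also have "ennreal (1 / c) * ennreal (c * ?E) = ennreal ?E"
    using c by (simp flip: ennreal_mult)
  finally show ?thesis .
qed

lemma nn_integral_erlang_convolution:
  assumes r: "0 < r" and [measurable]: "h \<in> borel_measurable borel"
  shows "(\<integral>\<^sup>+t1. ennreal (erlang_density a r t1) * (\<integral>\<^sup>+t2. ennreal (erlang_density b r t2) * h (t1 + t2) \<partial>lborel) \<partial>lborel) =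
    (\<integral>\<^sup>+s. ennreal (erlang_density (Suc (a + b)) r s) * h s \<partial>lborel)"
proof -
  have shift: "(\<integral>\<^sup>+z. ennreal (erlang_density b r z) * h (t + z) \<partial>lborel) =
      (\<integral>\<^sup>+s. ennreal (erlang_density b r (s - t)) * h s \<partial>lborel)" for t
  proof -
    have "(\<lambda>s. ennreal (erlang_density b r (s - t)) * h s) \<in> borel_measurable borel"
      by measurable
    from nn_integral_real_affine[OF this, of 1 t] show ?thesis
      by simp
  qed
  have "(\<integral>\<^sup>+t1. ennreal (erlang_density a r t1) * (\<integral>\<^sup>+t2. ennreal (erlang_density b r t2) * h (t1 + t2) \<partial>lborel) \<partial>lborel) =
      (\<integral>\<^sup>+t. \<integral>\<^sup>+s. ennreal (erlang_density a r t) * ennreal (erlang_density b r (s - t)) * h s \<partial>lborel \<partial>lborel)"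
    by (simp add: shift nn_integral_cmult mult.assoc)
  also have "\<dots> = (\<integral>\<^sup>+s. \<integral>\<^sup>+t. ennreal (erlang_density a r t) * ennreal (erlang_density b r (s - t)) * h s \<partial>lborel \<partial>lborel)"
    by (rule lborel_pair.Fubini') measurable
  also have "\<dots> = (\<integral>\<^sup>+s. (\<integral>\<^sup>+t. ennreal (erlang_density b r (s - t)) * ennreal (erlang_density a r t) \<partial>lborel) * h s \<partial>lborel)"
  proof -
    have "(\<integral>\<^sup>+t. ennreal (erlang_density b r (s - t)) * ennreal (erlang_density a r t) * h s \<partial>lborel) =
        (\<integral>\<^sup>+t. ennreal (erlang_density b r (s - t)) * ennreal (erlang_density a r t) \<partial>lborel) * h s" for s
      by (rule nn_integral_multc) measurable
    then show ?thesis
      by (simp add: mult_ac)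
  qed
  also have "\<dots> = (\<integral>\<^sup>+s. ennreal (erlang_density (Suc (a + b)) r s) * h s \<partial>lborel)"
    using convolution_erlang_density[OF r, of b a] by (simp add: fun_eq_iff add.commute)
  finally show ?thesis .
qed

lemma erlang_density_nonpos: "N \<ge> 1 \<Longrightarrow> s \<le> 0 \<Longrightarrow> erlang_density N r s = 0"
  by (cases "s = 0") (auto simp: erlang_density_def)

lemma erlang_density_scaled: "\<sigma> > 0 \<Longrightarrow> v > 0 \<Longrightarrow> erlang_density N (1 / \<sigma>) (\<sigma> * v) = (1 / \<sigma>) * v ^ N * exp (- v) / fact N"
  by (simp add: erlang_density_def power_mult_distrib power_divide not_less)

lemma shifted_exp_density_eq_exponential_density:
  "0 < \<sigma> \<Longrightarrow> shifted_exp_density m \<sigma> x = exponential_density (1 / \<sigma>) (x - m)"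
  by (simp add: shifted_exp_density_def exponential_density_def divide_simps)

lemma sigma_finite_density_exponential:
  "sigma_finite_measure (density lborel (\<lambda>x. ennreal (exponential_density r (x - \<mu>))))"
  by (subst sigma_finite_measure.sigma_finite_iff_density_finite'[OF sigma_finite_lborel]) auto

lemma Gamma_twice_pred_eq_fact: "n \<ge> 2 \<Longrightarrow> Gamma (2 * (real n - 1)) = fact (2 * n - 3)"
proof -
  assume n: "n \<ge> 2"
  have h: "2 * (real n - 1) = 1 + of_nat (2 * n - 3)" using n by (simp add: of_nat_diff)
  show ?thesis by (subst h) (rule Gamma_fact)
qed

section \<open>Minimum and spacing sum of exponential samples\<close>

text \<open>Integral of \<open>h\<close> against the law of the sum of the spacings \<open>x\<^sub>j - min x\<close> of \<open>k\<close> i.i.d.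
  \<open>Exp(r)\<close> samples, i.e. against the Erlang law with \<open>k - 1\<close> phases (the point mass at 0 if \<open>k \<le> 1\<close>).\<close>

definition spacing_sum_integral :: "real \<Rightarrow> nat \<Rightarrow> (real \<Rightarrow> ennreal) \<Rightarrow> ennreal" where
  "spacing_sum_integral r k h =
    (if k \<le> 1 then h 0 else \<integral>\<^sup>+t. ennreal (erlang_density (k - 2) r t) * h t \<partial>lborel)"

lemma spacing_sum_integral_measurable[measurable]:
  assumes [measurable]: "(\<lambda>(x, t). g x t) \<in> borel_measurable (N \<Otimes>\<^sub>M borel)"
  shows "(\<lambda>x. spacing_sum_integral r k (g x)) \<in> borel_measurable N"
  unfolding spacing_sum_integral_def by measurable

lemma spacing_sum_integral_cmult:
  assumes [measurable]: "h \<in> borel_measurable borel"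
  shows "spacing_sum_integral r k (\<lambda>t. c * h t) = c * spacing_sum_integral r k h"
  unfolding spacing_sum_integral_def
  by (auto simp: nn_integral_cmult[symmetric] mult.left_commute intro!: nn_integral_cong)

lemma spacing_sum_integral_add:
  assumes [measurable]: "h1 \<in> borel_measurable borel" "h2 \<in> borel_measurable borel"
  shows "spacing_sum_integral r k (\<lambda>t. h1 t + h2 t) = spacing_sum_integral r k h1 + spacing_sum_integral r k h2"
  unfolding spacing_sum_integral_def
  by (auto simp: nn_integral_add[symmetric] distrib_left intro!: nn_integral_cong)

lemma spacing_sum_integral_nn_integral:
  assumes [measurable]: "(\<lambda>(t, y). F t y) \<in> borel_measurable (borel \<Otimes>\<^sub>M borel)"
  shows "spacing_sum_integral r k (\<lambda>t. \<integral>\<^sup>+y. F t y \<partial>lborel) =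
    (\<integral>\<^sup>+y. spacing_sum_integral r k (\<lambda>t. F t y) \<partial>lborel)"
proof (cases "k \<le> 1")
  case False
  then have "spacing_sum_integral r k (\<lambda>t. \<integral>\<^sup>+y. F t y \<partial>lborel) =
      (\<integral>\<^sup>+t. \<integral>\<^sup>+y. ennreal (erlang_density (k - 2) r t) * F t y \<partial>lborel \<partial>lborel)"
    by (simp add: spacing_sum_integral_def nn_integral_cmult)
  also have "\<dots> = (\<integral>\<^sup>+y. \<integral>\<^sup>+t. ennreal (erlang_density (k - 2) r t) * F t y \<partial>lborel \<partial>lborel)"
    by (rule lborel_pair.Fubini') measurable
  finally show ?thesis
    using False by (simp add: spacing_sum_integral_def)
qed (simp add: spacing_sum_integral_def)

lemma spacing_sum_integral_Suc:
  assumes r: "0 < r" and k: "1 \<le> k" and [measurable]: "h \<in> borel_measurable borel"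
  shows "spacing_sum_integral r k (\<lambda>t. \<integral>\<^sup>+z. ennreal (exponential_density r z) * h (t + z) \<partial>lborel) =
    spacing_sum_integral r (Suc k) h"
proof (cases "k = 1")
  case False
  then have "Suc (k - 2 + 0) = Suc k - 2"
    using k by simp
  then show ?thesis
    using False k nn_integral_erlang_convolution[OF r, of h "k - 2" 0]
    by (simp add: spacing_sum_integral_def)
qed (simp add: spacing_sum_integral_def)

definition spacing_sum :: "'i set \<Rightarrow> ('i \<Rightarrow> real) \<Rightarrow> real" where
  "spacing_sum K x = (\<Sum>j\<in>K. x j - Min (x ` K))"

lemma borel_measurable_spacing_sum:
  assumes "finite K" and "\<And>j. j \<in> K \<Longrightarrow> (\<lambda>\<omega>. f \<omega> j) \<in> borel_measurable N"
  shows "(\<lambda>\<omega>. spacing_sum K (f \<omega>)) \<in> borel_measurable N"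
  unfolding spacing_sum_def using assms
  by (intro borel_measurable_sum borel_measurable_diff borel_measurable_Min) auto

lemma Min_fun_upd_insert:
  fixes x :: "'i \<Rightarrow> real"
  assumes "finite K" "K \<noteq> {}" "a \<notin> K"
  shows "Min ((x(a := y)) ` insert a K) = min y (Min (x ` K))"
proof -
  have "(x(a := y)) ` insert a K = insert y (x ` K)"
    using assms(3) by (auto simp: image_def)
  then show ?thesis
    using assms by (simp add: Min_insert)
qed

lemma spacing_sum_fun_upd_insert:
  fixes x :: "'i \<Rightarrow> real"
  assumes K: "finite K" "K \<noteq> {}" "a \<notin> K"
  shows "spacing_sum (insert a K) (x(a := y)) =
    (if Min (x ` K) \<le> y then spacing_sum K x + (y - Min (x ` K))
     else spacing_sum K x + real (card K) * (Min (x ` K) - y))"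
proof -
  have shift: "(\<Sum>j\<in>K. (x(a := y)) j - c) = spacing_sum K x + real (card K) * (Min (x ` K) - c)" for c
  proof -
    have "(\<Sum>j\<in>K. (x(a := y)) j - c) = (\<Sum>j\<in>K. x j - c)"
      using K(3) by (intro sum.cong) auto
    then show ?thesis
      by (simp add: spacing_sum_def sum_subtractf algebra_simps)
  qed
  have "spacing_sum (insert a K) (x(a := y)) =
      (y - min y (Min (x ` K))) + (\<Sum>j\<in>K. (x(a := y)) j - min y (Min (x ` K)))"
    unfolding spacing_sum_def Min_fun_upd_insert[OF K] sum.insert[OF K(1) K(3)] fun_upd_same ..
  then show ?thesis
    unfolding shift by (cases "Min (x ` K) \<le> y") (auto simp: min_def)
qed

lemma spacing_sum_Times_singleton: "spacing_sum ({i} \<times> K) x = spacing_sum K (\<lambda>j. x (i, j))"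
proof -
  have "{i} \<times> K = Pair i ` K" and "x ` Pair i ` K = (\<lambda>j. x (i, j)) ` K"
    by auto
  then show ?thesis
    unfolding spacing_sum_def by (simp add: sum.reindex inj_on_def)
qed

lemma spacing_sum_integral_insert_above:
  fixes g :: "real \<times> real \<Rightarrow> ennreal"
  assumes r: "0 < r" and k: "1 \<le> k" and [measurable]: "g \<in> borel_measurable (borel \<Otimes>\<^sub>M borel)"
  shows "(\<integral>\<^sup>+m. ennreal (exponential_density (real k * r) (m - \<mu>)) * spacing_sum_integral r k (\<lambda>t.
        \<integral>\<^sup>+y. ennreal (exponential_density r (y - \<mu>)) * indicator {m<..} y * g (m, t + (y - m)) \<partial>lborel) \<partial>lborel) =
    (\<integral>\<^sup>+m. ennreal (exponential_density (real k * r) (m - \<mu>) * exp (- (r * (m - \<mu>)))) *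
        spacing_sum_integral r (Suc k) (\<lambda>t. g (m, t)) \<partial>lborel)"
proof (intro nn_integral_cong)
  fix m :: real
  show "ennreal (exponential_density (real k * r) (m - \<mu>)) * spacing_sum_integral r k (\<lambda>t.
        \<integral>\<^sup>+y. ennreal (exponential_density r (y - \<mu>)) * indicator {m<..} y * g (m, t + (y - m)) \<partial>lborel) =
    ennreal (exponential_density (real k * r) (m - \<mu>) * exp (- (r * (m - \<mu>)))) *
        spacing_sum_integral r (Suc k) (\<lambda>t. g (m, t))"
  proof (cases "\<mu> \<le> m")
    case True
    have "spacing_sum_integral r k (\<lambda>t.
        \<integral>\<^sup>+y. ennreal (exponential_density r (y - \<mu>)) * indicator {m<..} y * g (m, t + (y - m)) \<partial>lborel) =
      spacing_sum_integral r k (\<lambda>t.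
        ennreal (exp (- (r * (m - \<mu>)))) * \<integral>\<^sup>+z. ennreal (exponential_density r z) * g (m, t + z) \<partial>lborel)"
    proof -
      have "(\<integral>\<^sup>+y. ennreal (exponential_density r (y - \<mu>)) * indicator {m<..} y * g (m, t + (y - m)) \<partial>lborel) =
        ennreal (exp (- (r * (m - \<mu>)))) * \<integral>\<^sup>+z. ennreal (exponential_density r z) * g (m, t + z) \<partial>lborel" for t
        using nn_integral_exponential_tail[OF r _ True, of 1 "\<lambda>z. g (m, t + z)"] by simp
      then show ?thesis
        by simp
    qed
    also have "\<dots> = ennreal (exp (- (r * (m - \<mu>)))) * spacing_sum_integral r (Suc k) (\<lambda>t. g (m, t))"
      using spacing_sum_integral_Suc[OF r k, of "\<lambda>t. g (m, t)"] by (simp add: spacing_sum_integral_cmult)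
    finally show ?thesis
      using r by (simp add: ennreal_mult mult.assoc)
  qed (simp add: exponential_density_def)
qed

lemma spacing_sum_integral_insert_below:
  fixes g :: "real \<times> real \<Rightarrow> ennreal"
  assumes r: "0 < r" and k: "1 \<le> k" and [measurable]: "g \<in> borel_measurable (borel \<Otimes>\<^sub>M borel)"
  shows "(\<integral>\<^sup>+m. ennreal (exponential_density (real k * r) (m - \<mu>)) * spacing_sum_integral r k (\<lambda>t.
        \<integral>\<^sup>+y. ennreal (exponential_density r (y - \<mu>)) * indicator {..<m} y * g (y, t + real k * (m - y)) \<partial>lborel) \<partial>lborel) =
    (\<integral>\<^sup>+y. ennreal (exponential_density r (y - \<mu>) * exp (- (real k * r * (y - \<mu>)))) *
        spacing_sum_integral r (Suc k) (\<lambda>t. g (y, t)) \<partial>lborel)"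
proof -
  let ?F = "\<lambda>t m y. ennreal (exponential_density (real k * r) (m - \<mu>)) *
    (ennreal (exponential_density r (y - \<mu>)) * indicator {..<m} y * g (y, t + real k * (m - y)))"
  have k_pos: "0 < real k"
    using k by simp
  have tail: "(\<integral>\<^sup>+m. ?F t m y \<partial>lborel) = ennreal (exponential_density r (y - \<mu>) * exp (- (real k * r * (y - \<mu>)))) *
      (\<integral>\<^sup>+z. ennreal (exponential_density r z) * g (y, t + z) \<partial>lborel)" for t y
  proof (cases "\<mu> \<le> y")
    case True
    have "(\<integral>\<^sup>+m. ?F t m y \<partial>lborel) = ennreal (exponential_density r (y - \<mu>)) * (\<integral>\<^sup>+m.
        ennreal (exponential_density (real k * r) (m - \<mu>)) * indicator {y<..} m * g (y, t + real k * (m - y)) \<partial>lborel)"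
      by (subst nn_integral_cmult[symmetric]) (measurable, auto intro!: nn_integral_cong simp: mult_ac split: split_indicator)
    also have "\<dots> = ennreal (exponential_density r (y - \<mu>)) * (ennreal (exp (- (real k * r * (y - \<mu>)))) *
        (\<integral>\<^sup>+z. ennreal (exponential_density r z) * g (y, t + z) \<partial>lborel))"
      using nn_integral_exponential_tail[OF r k_pos True, of "\<lambda>z. g (y, t + z)"] by simp
    finally show ?thesis
      using r by (simp add: ennreal_mult mult.assoc)
  qed (simp add: exponential_density_def)
  have "(\<integral>\<^sup>+m. ennreal (exponential_density (real k * r) (m - \<mu>)) * spacing_sum_integral r k (\<lambda>t.
        \<integral>\<^sup>+y. ennreal (exponential_density r (y - \<mu>)) * indicator {..<m} y * g (y, t + real k * (m - y)) \<partial>lborel) \<partial>lborel) =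
      (\<integral>\<^sup>+m. spacing_sum_integral r k (\<lambda>t. \<integral>\<^sup>+y. ?F t m y \<partial>lborel) \<partial>lborel)"
    by (intro nn_integral_cong) (simp add: spacing_sum_integral_cmult nn_integral_cmult)
  also have "\<dots> = spacing_sum_integral r k (\<lambda>t. \<integral>\<^sup>+m. \<integral>\<^sup>+y. ?F t m y \<partial>lborel \<partial>lborel)"
    by (rule spacing_sum_integral_nn_integral[symmetric]) measurable
  also have "\<dots> = spacing_sum_integral r k (\<lambda>t. \<integral>\<^sup>+y. \<integral>\<^sup>+m. ?F t m y \<partial>lborel \<partial>lborel)"
    by (intro arg_cong[where f = "spacing_sum_integral r k"] ext lborel_pair.Fubini') measurable
  also have "\<dots> = (\<integral>\<^sup>+y. spacing_sum_integral r k (\<lambda>t. ennreal (exponential_density r (y - \<mu>) *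
      exp (- (real k * r * (y - \<mu>)))) * (\<integral>\<^sup>+z. ennreal (exponential_density r z) * g (y, t + z) \<partial>lborel)) \<partial>lborel)"
    unfolding tail by (rule spacing_sum_integral_nn_integral) measurable
  also have "\<dots> = (\<integral>\<^sup>+y. ennreal (exponential_density r (y - \<mu>) * exp (- (real k * r * (y - \<mu>)))) *
        spacing_sum_integral r (Suc k) (\<lambda>t. g (y, t)) \<partial>lborel)"
  proof (intro nn_integral_cong)
    fix y
    show "spacing_sum_integral r k (\<lambda>t. ennreal (exponential_density r (y - \<mu>) * exp (- (real k * r * (y - \<mu>)))) *
        (\<integral>\<^sup>+z. ennreal (exponential_density r z) * g (y, t + z) \<partial>lborel)) =
      ennreal (exponential_density r (y - \<mu>) * exp (- (real k * r * (y - \<mu>)))) *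
        spacing_sum_integral r (Suc k) (\<lambda>t. g (y, t))"
      using spacing_sum_integral_Suc[OF r k, of "\<lambda>t. g (y, t)"] by (simp add: spacing_sum_integral_cmult)
  qed
  finally show ?thesis .
qed

lemma spacing_sum_integral_insert:
  fixes g :: "real \<times> real \<Rightarrow> ennreal"
  assumes r: "0 < r" and k: "1 \<le> k" and [measurable]: "g \<in> borel_measurable (borel \<Otimes>\<^sub>M borel)"
  shows "(\<integral>\<^sup>+m. ennreal (exponential_density (real k * r) (m - \<mu>)) * spacing_sum_integral r k (\<lambda>t.
        \<integral>\<^sup>+y. ennreal (exponential_density r (y - \<mu>)) *
          g (min y m, if m \<le> y then t + (y - m) else t + real k * (m - y)) \<partial>lborel) \<partial>lborel) =
    (\<integral>\<^sup>+m. ennreal (exponential_density (real (Suc k) * r) (m - \<mu>)) *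
        spacing_sum_integral r (Suc k) (\<lambda>t. g (m, t)) \<partial>lborel)"
proof -
  define above where "above m t = (\<integral>\<^sup>+y. ennreal (exponential_density r (y - \<mu>)) * indicator {m<..} y *
    g (m, t + (y - m)) \<partial>lborel)" for m t
  define below where "below m t = (\<integral>\<^sup>+y. ennreal (exponential_density r (y - \<mu>)) * indicator {..<m} y *
    g (y, t + real k * (m - y)) \<partial>lborel)" for m t
  have [measurable]: "(\<lambda>(m, t). above m t) \<in> borel_measurable (borel \<Otimes>\<^sub>M borel)"
    "(\<lambda>(m, t). below m t) \<in> borel_measurable (borel \<Otimes>\<^sub>M borel)"
    unfolding above_def below_def by measurable
  have split: "(\<integral>\<^sup>+y. ennreal (exponential_density r (y - \<mu>)) *
      g (min y m, if m \<le> y then t + (y - m) else t + real k * (m - y)) \<partial>lborel) = above m t + below m t" for m t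
  proof -
    have "AE y in lborel. ennreal (exponential_density r (y - \<mu>)) *
        g (min y m, if m \<le> y then t + (y - m) else t + real k * (m - y)) =
      ennreal (exponential_density r (y - \<mu>)) * indicator {m<..} y * g (m, t + (y - m)) +
      ennreal (exponential_density r (y - \<mu>)) * indicator {..<m} y * g (y, t + real k * (m - y))"
      using AE_lborel_singleton[of m] by eventually_elim (auto simp: min_def split: split_indicator)
    then show ?thesis
      unfolding above_def below_def by (subst nn_integral_add[symmetric]) (measurable, rule nn_integral_cong_AE)
  qed
  have "(\<integral>\<^sup>+m. ennreal (exponential_density (real k * r) (m - \<mu>)) * spacing_sum_integral r k (\<lambda>t.
        \<integral>\<^sup>+y. ennreal (exponential_density r (y - \<mu>)) *
          g (min y m, if m \<le> y then t + (y - m) else t + real k * (m - y)) \<partial>lborel) \<partial>lborel) =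
      (\<integral>\<^sup>+m. ennreal (exponential_density (real k * r) (m - \<mu>)) * spacing_sum_integral r k (above m) \<partial>lborel) +
      (\<integral>\<^sup>+m. ennreal (exponential_density (real k * r) (m - \<mu>)) * spacing_sum_integral r k (below m) \<partial>lborel)"
    by (simp add: split spacing_sum_integral_add distrib_left nn_integral_add)
  also have "\<dots> = (\<integral>\<^sup>+m. ennreal (exponential_density (real k * r) (m - \<mu>) * exp (- (r * (m - \<mu>)))) *
        spacing_sum_integral r (Suc k) (\<lambda>t. g (m, t)) \<partial>lborel) +
      (\<integral>\<^sup>+m. ennreal (exponential_density r (m - \<mu>) * exp (- (real k * r * (m - \<mu>)))) *
        spacing_sum_integral r (Suc k) (\<lambda>t. g (m, t)) \<partial>lborel)"
    unfolding above_def below_def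
      spacing_sum_integral_insert_above[OF r k assms(3)] spacing_sum_integral_insert_below[OF r k assms(3)] ..
  also have "\<dots> = (\<integral>\<^sup>+m. ennreal (exponential_density (real (Suc k) * r) (m - \<mu>)) *
        spacing_sum_integral r (Suc k) (\<lambda>t. g (m, t)) \<partial>lborel)"
  proof (subst nn_integral_add[symmetric], measurable, intro nn_integral_cong)
    fix m
    have "ennreal (exponential_density (real k * r) (m - \<mu>) * exp (- (r * (m - \<mu>)))) +
        ennreal (exponential_density r (m - \<mu>) * exp (- (real k * r * (m - \<mu>)))) =
      ennreal (exponential_density (real (Suc k) * r) (m - \<mu>))"
      using r exponential_density_rate_add[of "real k * r" "m - \<mu>" r]
      by (subst ennreal_plus[symmetric]) (auto simp: algebra_simps)
    then show "ennreal (exponential_density (real k * r) (m - \<mu>) * exp (- (r * (m - \<mu>)))) *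
        spacing_sum_integral r (Suc k) (\<lambda>t. g (m, t)) +
      ennreal (exponential_density r (m - \<mu>) * exp (- (real k * r * (m - \<mu>)))) *
        spacing_sum_integral r (Suc k) (\<lambda>t. g (m, t)) =
      ennreal (exponential_density (real (Suc k) * r) (m - \<mu>)) * spacing_sum_integral r (Suc k) (\<lambda>t. g (m, t))"
      by (metis distrib_right)
  qed
  finally show ?thesis .
qed

theorem nn_integral_Min_spacing_sum:
  fixes K :: "'i set" and g :: "real \<times> real \<Rightarrow> ennreal"
  assumes "finite K" "K \<noteq> {}" and r: "0 < r" and "g \<in> borel_measurable (borel \<Otimes>\<^sub>M borel)"
  shows "(\<integral>\<^sup>+x. g (Min (x ` K), spacing_sum K x)
      \<partial>PiM K (\<lambda>_. density lborel (\<lambda>x. ennreal (exponential_density r (x - \<mu>))))) =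
    (\<integral>\<^sup>+m. ennreal (exponential_density (real (card K) * r) (m - \<mu>)) *
      spacing_sum_integral r (card K) (\<lambda>t. g (m, t)) \<partial>lborel)"
  using assms(1,2,4)
proof (induction K arbitrary: g rule: finite_ne_induct)
  case (singleton a)
  note [measurable] = singleton
  have "(\<integral>\<^sup>+x. g (Min (x ` {a}), spacing_sum {a} x)
      \<partial>PiM {a} (\<lambda>_. density lborel (\<lambda>x. ennreal (exponential_density r (x - \<mu>))))) =
    (\<integral>\<^sup>+x. g (x a, 0) \<partial>PiM {a} (\<lambda>_. density lborel (\<lambda>x. ennreal (exponential_density r (x - \<mu>)))))"
    by (simp add: spacing_sum_def)
  also have "\<dots> = (\<integral>\<^sup>+y. g (y, 0) \<partial>density lborel (\<lambda>x. ennreal (exponential_density r (x - \<mu>))))"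
    by (rule product_sigma_finite.product_nn_integral_singleton)
      (auto simp: product_sigma_finite_def sigma_finite_density_exponential)
  also have "\<dots> = (\<integral>\<^sup>+y. ennreal (exponential_density r (y - \<mu>)) * g (y, 0) \<partial>lborel)"
    by (rule nn_integral_density) measurable
  finally show ?case
    by (simp add: spacing_sum_integral_def)
next
  case (insert a K)
  let ?D = "density lborel (\<lambda>x. ennreal (exponential_density r (x - \<mu>)))"
  interpret product_sigma_finite "\<lambda>_. ?D"
    by (simp add: product_sigma_finite_def sigma_finite_density_exponential)
  note [measurable] = insert.prems
  define k where "k = card K"
  have k: "1 \<le> k"
    using insert.hyps by (simp add: k_def Suc_le_eq card_gt_0_iff)
  define G where "G = (\<lambda>(m, t). \<integral>\<^sup>+y. ennreal (exponential_density r (y - \<mu>)) *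
    g (min y m, if m \<le> y then t + (y - m) else t + real k * (m - y)) \<partial>lborel)"
  have [measurable]: "G \<in> borel_measurable (borel \<Otimes>\<^sub>M borel)"
    unfolding G_def by measurable
  have component: "(\<lambda>x. x i) \<in> borel_measurable (PiM (insert a K) (\<lambda>_. ?D))" if "i \<in> insert a K" for i
    using measurable_component_singleton[OF that, of "\<lambda>_. ?D"] by simp
  have "(\<lambda>x. g (Min (x ` insert a K), spacing_sum (insert a K) x)) \<in> borel_measurable (PiM (insert a K) (\<lambda>_. ?D))"
    using insert.hyps by (intro measurable_compose[OF measurable_Pair insert.prems] borel_measurable_Min
        borel_measurable_spacing_sum component) auto
  then have "(\<integral>\<^sup>+x. g (Min (x ` insert a K), spacing_sum (insert a K) x) \<partial>PiM (insert a K) (\<lambda>_. ?D)) =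
    (\<integral>\<^sup>+x. \<integral>\<^sup>+y. g (Min ((x(a := y)) ` insert a K), spacing_sum (insert a K) (x(a := y))) \<partial>?D \<partial>PiM K (\<lambda>_. ?D))"
    using insert.hyps by (intro product_nn_integral_insert) auto
  also have "\<dots> = (\<integral>\<^sup>+x. G (Min (x ` K), spacing_sum K x) \<partial>PiM K (\<lambda>_. ?D))"
  proof (intro nn_integral_cong)
    fix x :: "'i \<Rightarrow> real"
    show "(\<integral>\<^sup>+y. g (Min ((x(a := y)) ` insert a K), spacing_sum (insert a K) (x(a := y))) \<partial>?D) =
      G (Min (x ` K), spacing_sum K x)"
      unfolding Min_fun_upd_insert[OF insert.hyps] spacing_sum_fun_upd_insert[OF insert.hyps] G_def k_def
      by (simp, rule nn_integral_density) measurable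
  qed
  also have "\<dots> = (\<integral>\<^sup>+m. ennreal (exponential_density (real k * r) (m - \<mu>)) *
      spacing_sum_integral r k (\<lambda>t. G (m, t)) \<partial>lborel)"
    using insert.IH[of G] by (simp add: k_def)
  also have "\<dots> = (\<integral>\<^sup>+m. ennreal (exponential_density (real (Suc k) * r) (m - \<mu>)) *
      spacing_sum_integral r (Suc k) (\<lambda>t. g (m, t)) \<partial>lborel)"
    unfolding G_def using spacing_sum_integral_insert[OF r k insert.prems] by simp
  finally show ?case
    using insert.hyps by (simp add: k_def)
qed

lemma nn_integral_two_spacing_sums:
  fixes G :: "real \<times> real \<times> real \<Rightarrow> ennreal"
  assumes r: "0 < r" and k: "2 \<le> k" and [measurable]: "G \<in> borel_measurable (borel \<Otimes>\<^sub>M borel \<Otimes>\<^sub>M borel)"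
  shows "(\<integral>\<^sup>+m1. ennreal (exponential_density (real k * r) (m1 - \<mu>1)) * spacing_sum_integral r k (\<lambda>t1.
        \<integral>\<^sup>+m2. ennreal (exponential_density (real k * r) (m2 - \<mu>2)) *
          spacing_sum_integral r k (\<lambda>t2. G (m1, m2, t1 + t2)) \<partial>lborel) \<partial>lborel) =
    (\<integral>\<^sup>+m1. \<integral>\<^sup>+m2. \<integral>\<^sup>+s. ennreal (exponential_density (real k * r) (m1 - \<mu>1) *
        exponential_density (real k * r) (m2 - \<mu>2) * erlang_density (2 * k - 3) r s) * G (m1, m2, s)
      \<partial>lborel \<partial>lborel \<partial>lborel)"
proof -
  let ?D1 = "\<lambda>m1. ennreal (exponential_density (real k * r) (m1 - \<mu>1))"
  let ?D2 = "\<lambda>m2. ennreal (exponential_density (real k * r) (m2 - \<mu>2))"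
  let ?E = "\<lambda>t. ennreal (erlang_density (k - 2) r t)"
  let ?S = "\<lambda>s. ennreal (erlang_density (2 * k - 3) r s)"
  have unfold: "spacing_sum_integral r k h = (\<integral>\<^sup>+t. ?E t * h t \<partial>lborel)" for h
    using k by (simp add: spacing_sum_integral_def)
  have convolution: "(\<integral>\<^sup>+t1. ?E t1 * (\<integral>\<^sup>+t2. ?E t2 * G (m1, m2, t1 + t2) \<partial>lborel) \<partial>lborel) =
      (\<integral>\<^sup>+s. ?S s * G (m1, m2, s) \<partial>lborel)" for m1 m2
  proof -
    have "Suc (k - 2 + (k - 2)) = 2 * k - 3"
      using k by simp
    moreover have "(\<lambda>s. G (m1, m2, s)) \<in> borel_measurable borel"
      by measurable
    ultimately show ?thesis
      using nn_integral_erlang_convolution[OF r, of "\<lambda>s. G (m1, m2, s)" "k - 2" "k - 2"] by (simp only:)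
  qed
  have inner: "(\<integral>\<^sup>+t1. ?E t1 * (\<integral>\<^sup>+m2. ?D2 m2 * (\<integral>\<^sup>+t2. ?E t2 * G (m1, m2, t1 + t2) \<partial>lborel) \<partial>lborel) \<partial>lborel) =
      (\<integral>\<^sup>+m2. ?D2 m2 * (\<integral>\<^sup>+s. ?S s * G (m1, m2, s) \<partial>lborel) \<partial>lborel)" for m1
  proof -
    have "(\<integral>\<^sup>+t1. ?E t1 * (\<integral>\<^sup>+m2. ?D2 m2 * (\<integral>\<^sup>+t2. ?E t2 * G (m1, m2, t1 + t2) \<partial>lborel) \<partial>lborel) \<partial>lborel) =
        (\<integral>\<^sup>+t1. \<integral>\<^sup>+m2. ?D2 m2 * (?E t1 * (\<integral>\<^sup>+t2. ?E t2 * G (m1, m2, t1 + t2) \<partial>lborel)) \<partial>lborel \<partial>lborel)"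
      by (intro nn_integral_cong) (subst nn_integral_cmult[symmetric], measurable, simp add: mult_ac)
    also have "\<dots> = (\<integral>\<^sup>+m2. \<integral>\<^sup>+t1. ?D2 m2 * (?E t1 * (\<integral>\<^sup>+t2. ?E t2 * G (m1, m2, t1 + t2) \<partial>lborel)) \<partial>lborel \<partial>lborel)"
      by (rule lborel_pair.Fubini') measurable
    also have "\<dots> = (\<integral>\<^sup>+m2. ?D2 m2 * (\<integral>\<^sup>+t1. ?E t1 * (\<integral>\<^sup>+t2. ?E t2 * G (m1, m2, t1 + t2) \<partial>lborel) \<partial>lborel) \<partial>lborel)"
      by (intro nn_integral_cong nn_integral_cmult) measurable
    finally show ?thesis
      by (simp only: convolution)
  qed
  have "(\<integral>\<^sup>+m1. ?D1 m1 * spacing_sum_integral r k (\<lambda>t1.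
        \<integral>\<^sup>+m2. ?D2 m2 * spacing_sum_integral r k (\<lambda>t2. G (m1, m2, t1 + t2)) \<partial>lborel) \<partial>lborel) =
      (\<integral>\<^sup>+m1. ?D1 m1 * (\<integral>\<^sup>+m2. ?D2 m2 * (\<integral>\<^sup>+s. ?S s * G (m1, m2, s) \<partial>lborel) \<partial>lborel) \<partial>lborel)"
    unfolding unfold inner ..
  also have "\<dots> = (\<integral>\<^sup>+m1. \<integral>\<^sup>+m2. \<integral>\<^sup>+s. ?D1 m1 * (?D2 m2 * (?S s * G (m1, m2, s))) \<partial>lborel \<partial>lborel \<partial>lborel)"
    by (simp add: nn_integral_cmult)
  also have "\<dots> = (\<integral>\<^sup>+m1. \<integral>\<^sup>+m2. \<integral>\<^sup>+s. ennreal (exponential_density (real k * r) (m1 - \<mu>1) *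
        exponential_density (real k * r) (m2 - \<mu>2) * erlang_density (2 * k - 3) r s) * G (m1, m2, s)
      \<partial>lborel \<partial>lborel \<partial>lborel)"
    using r by (simp add: ennreal_mult mult.assoc)
  finally show ?thesis .
qed

lemma nn_integral_two_samples:
  fixes J1 J2 :: "'i set" and G :: "real \<times> real \<times> real \<Rightarrow> ennreal"
  assumes J: "finite J1" "finite J2" "J1 \<inter> J2 = {}" "card J1 = k" "card J2 = k"
    and k: "2 \<le> k" and r: "0 < r" and [measurable]: "G \<in> borel_measurable (borel \<Otimes>\<^sub>M borel \<Otimes>\<^sub>M borel)"
  shows "(\<integral>\<^sup>+x. G (Min (x ` J1), Min (x ` J2), spacing_sum J1 x + spacing_sum J2 x)
      \<partial>PiM (J1 \<union> J2) (\<lambda>i. density lborel (\<lambda>x. ennreal (exponential_density r (x - (if i \<in> J1 then \<mu>1 else \<mu>2)))))) =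
    (\<integral>\<^sup>+m1. \<integral>\<^sup>+m2. \<integral>\<^sup>+s. ennreal (exponential_density (real k * r) (m1 - \<mu>1) *
        exponential_density (real k * r) (m2 - \<mu>2) * erlang_density (2 * k - 3) r s) * G (m1, m2, s)
      \<partial>lborel \<partial>lborel \<partial>lborel)"
proof -
  let ?D = "\<lambda>i. density lborel (\<lambda>x. ennreal (exponential_density r (x - (if i \<in> J1 then \<mu>1 else \<mu>2))))"
  let ?D1 = "density lborel (\<lambda>x. ennreal (exponential_density r (x - \<mu>1)))"
  let ?D2 = "density lborel (\<lambda>x. ennreal (exponential_density r (x - \<mu>2)))"
  interpret product_sigma_finite ?D
    by (simp add: product_sigma_finite_def sigma_finite_density_exponential)
  have nonempty: "J1 \<noteq> {}" "J2 \<noteq> {}"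
    using J k by auto
  have component: "(\<lambda>x. x i) \<in> borel_measurable (PiM (J1 \<union> J2) ?D)" if "i \<in> J1 \<union> J2" for i
    using measurable_component_singleton[OF that, of ?D] by simp
  have "(\<lambda>x. G (Min (x ` J1), Min (x ` J2), spacing_sum J1 x + spacing_sum J2 x)) \<in> borel_measurable (PiM (J1 \<union> J2) ?D)"
    using J by (intro measurable_compose[OF _ assms(8)] measurable_Pair borel_measurable_add borel_measurable_Min
        borel_measurable_spacing_sum component) auto
  then have "(\<integral>\<^sup>+x. G (Min (x ` J1), Min (x ` J2), spacing_sum J1 x + spacing_sum J2 x) \<partial>PiM (J1 \<union> J2) ?D) =
      (\<integral>\<^sup>+x1. \<integral>\<^sup>+x2. G (Min (merge J1 J2 (x1, x2) ` J1), Min (merge J1 J2 (x1, x2) ` J2),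
        spacing_sum J1 (merge J1 J2 (x1, x2)) + spacing_sum J2 (merge J1 J2 (x1, x2))) \<partial>PiM J2 ?D \<partial>PiM J1 ?D)"
    using J by (simp add: product_nn_integral_fold)
  also have "\<dots> = (\<integral>\<^sup>+x1. \<integral>\<^sup>+x2. G (Min (x1 ` J1), Min (x2 ` J2), spacing_sum J1 x1 + spacing_sum J2 x2)
      \<partial>PiM J2 (\<lambda>_. ?D2) \<partial>PiM J1 (\<lambda>_. ?D1))"
  proof -
    have image: "merge J1 J2 (x1, x2) ` J1 = x1 ` J1" "merge J1 J2 (x1, x2) ` J2 = x2 ` J2" for x1 x2 :: "'i \<Rightarrow> real"
      using J(3) by (auto simp: merge_def intro!: image_cong)
    moreover have "spacing_sum J1 (merge J1 J2 (x1, x2)) = spacing_sum J1 x1"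
      "spacing_sum J2 (merge J1 J2 (x1, x2)) = spacing_sum J2 x2" for x1 x2
      using J(3) unfolding spacing_sum_def image by (auto simp: merge_def intro!: sum.cong)
    moreover have "PiM J1 ?D = PiM J1 (\<lambda>_. ?D1)" "PiM J2 ?D = PiM J2 (\<lambda>_. ?D2)"
      using J(3) by (auto intro!: PiM_cong)
    ultimately show ?thesis
      by (simp only:)
  qed
  also have "\<dots> = (\<integral>\<^sup>+x1. (\<lambda>(m1, t1). \<integral>\<^sup>+m2. ennreal (exponential_density (real k * r) (m2 - \<mu>2)) *
        spacing_sum_integral r k (\<lambda>t2. G (m1, m2, t1 + t2)) \<partial>lborel) (Min (x1 ` J1), spacing_sum J1 x1)
      \<partial>PiM J1 (\<lambda>_. ?D1))"
    using nn_integral_Min_spacing_sum[OF J(2) nonempty(2) r, where g = "\<lambda>(m2, t2). G (_, m2, _ + t2)"] J(5)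
    by simp
  also have "\<dots> = (\<integral>\<^sup>+m1. ennreal (exponential_density (real k * r) (m1 - \<mu>1)) * spacing_sum_integral r k (\<lambda>t1.
        \<integral>\<^sup>+m2. ennreal (exponential_density (real k * r) (m2 - \<mu>2)) *
          spacing_sum_integral r k (\<lambda>t2. G (m1, m2, t1 + t2)) \<partial>lborel) \<partial>lborel)"
  proof -
    have "(\<lambda>(m1, t1). \<integral>\<^sup>+m2. ennreal (exponential_density (real k * r) (m2 - \<mu>2)) *
        spacing_sum_integral r k (\<lambda>t2. G (m1, m2, t1 + t2)) \<partial>lborel) \<in> borel_measurable (borel \<Otimes>\<^sub>M borel)"
      by measurable
    from nn_integral_Min_spacing_sum[OF J(1) nonempty(1) r this, of \<mu>1] show ?thesis
      using J(4) by simp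
  qed
  also have "\<dots> = (\<integral>\<^sup>+m1. \<integral>\<^sup>+m2. \<integral>\<^sup>+s. ennreal (exponential_density (real k * r) (m1 - \<mu>1) *
        exponential_density (real k * r) (m2 - \<mu>2) * erlang_density (2 * k - 3) r s) * G (m1, m2, s)
      \<partial>lborel \<partial>lborel \<partial>lborel)"
    by (rule nn_integral_two_spacing_sums[OF r k]) measurable
  finally show ?thesis .
qed

section \<open>The joint density of \<open>(U\<^sub>1, V, W)\<close>\<close>

text \<open>The factor common to both cases of \<open>f4\<close> when \<open>f1 = 1\<close>, with \<open>\<Gamma>(2(n - 1)) = (2n - 3)!\<close>.\<close>

definition uvw_kernel :: "nat \<Rightarrow> real \<Rightarrow> real \<Rightarrow> real \<Rightarrow> real" where
  "uvw_kernel n u v w =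
    real n ^ 2 / fact (2 * n - 3) * v ^ (2 * n - 2) * exp (- v * (1 + real n * w)) * exp (- 2 * real n * u)"

lemma uvw_kernel_nonneg: "v > 0 \<Longrightarrow> uvw_kernel n u v w \<ge> 0"
  unfolding uvw_kernel_def by simp

lemma uvw_branch_density:
  assumes \<sigma>: "0 < \<sigma>" and n: "n \<ge> 2" and u: "u \<ge> 0" and v: "v > 0"
  shows "\<sigma> ^ 3 * v * (erlang_density (2 * n - 3) (1 / \<sigma>) (\<sigma> * v) * exponential_density (real n * (1 / \<sigma>)) ((a + \<sigma> * u) - a) *
     exponential_density (real n * (1 / \<sigma>)) ((a + \<sigma> * u + \<sigma> * v * w) - b)) =
    (if b \<le> a + \<sigma> * u + \<sigma> * v * w then uvw_kernel n u v w * exp (real n * (b - a) / \<sigma>) else 0)"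
proof -
  define N where "N = 2 * n - 3"
  have N2: "2 * n - 2 = Suc N" using n unfolding N_def by simp
  show ?thesis
  proof (cases "b \<le> a + \<sigma> * u + \<sigma> * v * w")
    case False then show ?thesis by (simp add: exponential_density_def)
  next
    case True
    define X where "X = exp (- v)"
    define Y where "Y = exp (- (real n * u))"
    have e: "erlang_density N (1 / \<sigma>) (\<sigma> * v) = (1 / \<sigma>) * v ^ N * X / fact N"
      unfolding X_def by (rule erlang_density_scaled[OF \<sigma> v])
    have first: "exponential_density (real n * (1 / \<sigma>)) ((a + \<sigma> * u) - a) = real n / \<sigma> * Y"
    proof -
      have "- (\<sigma> * u) * (real n * (1 / \<sigma>)) = - (real n * u)"
        using \<sigma> by simp
      moreover have "\<not> \<sigma> * u < 0"
        using \<sigma> u by (simp add: not_less)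
      ultimately show ?thesis
        unfolding Y_def exponential_density_def by simp
    qed
    have second: "exponential_density (real n * (1 / \<sigma>)) ((a + \<sigma> * u + \<sigma> * v * w) - b) =
        real n / \<sigma> * exp (- (real n * (1 / \<sigma>) * (a + \<sigma> * u + \<sigma> * v * w - b)))"
      using True by (simp add: exponential_density_def algebra_simps)
    have ex: "X * Y * exp (- (real n * (1 / \<sigma>) * (a + \<sigma> * u + \<sigma> * v * w - b))) =
       exp (- v * (1 + real n * w)) * exp (- 2 * real n * u) * exp (real n * (b - a) / \<sigma>)"
    proof -
      have "- v + - (real n * u) + - (real n * (1 / \<sigma>) * (a + \<sigma> * u + \<sigma> * v * w - b)) =
         - v * (1 + real n * w) + - 2 * real n * u + real n * (b - a) / \<sigma>"
        using \<sigma> by (simp add: field_simps)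
      then show ?thesis unfolding X_def Y_def by (simp add: exp_add[symmetric])
    qed
    have alg: "\<sigma> ^ 3 * v * ((1 / \<sigma>) * v ^ N * X / fact N * (real n / \<sigma> * Y) * (real n / \<sigma> * W)) =
      real n ^ 2 / fact N * v ^ Suc N * (X * Y * W)" for W
    proof -
      have "\<sigma> ^ 3 * (1 / \<sigma>) * (1 / \<sigma>) * (1 / \<sigma>) = 1" using \<sigma> by (simp add: power3_eq_cube)
      then show ?thesis using \<sigma> by (simp add: power2_eq_square divide_simps mult_ac)
    qed
    have "\<sigma> ^ 3 * v * (erlang_density (2 * n - 3) (1 / \<sigma>) (\<sigma> * v) * exponential_density (real n * (1 / \<sigma>)) ((a + \<sigma> * u) - a) *
       exponential_density (real n * (1 / \<sigma>)) ((a + \<sigma> * u + \<sigma> * v * w) - b)) =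
       real n ^ 2 / fact N * v ^ Suc N * (exp (- v * (1 + real n * w)) * exp (- 2 * real n * u) * exp (real n * (b - a) / \<sigma>))"
      unfolding N_def[symmetric] e first second alg ex ..
    also have "\<dots> = uvw_kernel n u v w * exp (real n * (b - a) / \<sigma>)"
      unfolding uvw_kernel_def N2 N_def[symmetric] by (simp only: mult_ac)
    finally show ?thesis using True by simp
  qed
qed

lemma uvw_branch_value:
  fixes \<phi> :: "(real \<times> real) \<times> real \<Rightarrow> ennreal"
  assumes \<sigma>: "0 < \<sigma>" and n: "n \<ge> 2" and u: "u > 0" and v: "v > 0" and w: "w > 0"
    and I: "a + \<sigma> * u + \<sigma> * v * w \<in> I"
  shows "ennreal (\<sigma> ^ 3 * v) * indicator {0<..} v *
     (ennreal (erlang_density (2 * n - 3) (1 / \<sigma>) (\<sigma> * v) * exponential_density (real n * (1 / \<sigma>)) ((a + \<sigma> * u) - a) *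
        exponential_density (real n * (1 / \<sigma>)) ((a + \<sigma> * u + \<sigma> * v * w) - b)) *
      indicator I (a + \<sigma> * u + \<sigma> * v * w) *
      \<phi> (((a + \<sigma> * u - a) / \<sigma>, \<sigma> * v / \<sigma>), (a + \<sigma> * u + \<sigma> * v * w - (a + \<sigma> * u)) / (\<sigma> * v))) =
    ennreal (if b \<le> a + \<sigma> * u + \<sigma> * v * w then uvw_kernel n u v w * exp (real n * (b - a) / \<sigma>) else 0) * \<phi> ((u, v), w)"
proof -
  let ?p = "erlang_density (2 * n - 3) (1 / \<sigma>) (\<sigma> * v) * exponential_density (real n * (1 / \<sigma>)) ((a + \<sigma> * u) - a) *
    exponential_density (real n * (1 / \<sigma>)) ((a + \<sigma> * u + \<sigma> * v * w) - b)"
  have "0 \<le> ?p"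
    using \<sigma> by (auto intro!: mult_nonneg_nonneg)
  then have "ennreal (\<sigma> ^ 3 * v) * ennreal ?p = ennreal (\<sigma> ^ 3 * v * ?p)"
    using \<sigma> v by (simp flip: ennreal_mult)
  also have "\<dots> = ennreal (if b \<le> a + \<sigma> * u + \<sigma> * v * w then uvw_kernel n u v w * exp (real n * (b - a) / \<sigma>) else 0)"
    by (simp only: uvw_branch_density[OF \<sigma> n less_imp_le[OF u] v])
  moreover have "(((a + \<sigma> * u - a) / \<sigma>, \<sigma> * v / \<sigma>), (a + \<sigma> * u + \<sigma> * v * w - (a + \<sigma> * u)) / (\<sigma> * v)) = ((u, v), w)"
    using \<sigma> v by simp
  ultimately show ?thesis
    using v I by (simp add: mult_ac)
qed

lemma f4_one_eq_kernel:
  assumes n: "n \<ge> 2"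
  shows "real n ^ 2 / (Gamma (2 * (real n - 1)) * ((\<lambda>_. 1::real) w)) * v ^ (2 * n - 2) *
      exp (- v * (1 + real n * w)) * exp (- 2 * real n * u)
    = uvw_kernel n u v w"
  unfolding uvw_kernel_def Gamma_twice_pred_eq_fact[OF n] by simp

lemma f4_one_eq_branches:
  fixes \<mu>1 \<mu>2 \<sigma> u v w :: real
  assumes \<sigma>: "0 < \<sigma>" and n: "n \<ge> 2" and u: "u > 0" and v: "v > 0" and w: "w > 0"
    and ud: "u \<noteq> (max \<mu>1 \<mu>2 - min \<mu>1 \<mu>2) / \<sigma>" and uvd: "u + v * w \<noteq> (max \<mu>1 \<mu>2 - min \<mu>1 \<mu>2) / \<sigma>"
  shows "f4 n (real n * (max \<mu>1 \<mu>2 - min \<mu>1 \<mu>2) / \<sigma>) (\<lambda>_. 1) u v w =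
    uvw_kernel n u v w * ((if \<mu>2 \<le> \<mu>1 + \<sigma> * u + \<sigma> * v * w then exp (real n * (\<mu>2 - \<mu>1) / \<sigma>) else 0) +
                  (if \<mu>1 \<le> \<mu>2 + \<sigma> * u + \<sigma> * v * w then exp (real n * (\<mu>1 - \<mu>2) / \<sigma>) else 0))"
proof -
  define d where "d = (max \<mu>1 \<mu>2 - min \<mu>1 \<mu>2) / \<sigma>"
  define mu where "mu = real n * (max \<mu>1 \<mu>2 - min \<mu>1 \<mu>2) / \<sigma>"
  have npos: "real n > 0" using n by simp
  have d0: "d \<ge> 0" unfolding d_def using \<sigma> by simp
  have mu_n: "mu / real n = d" unfolding mu_def d_def using npos by simp
  have mud: "mu = real n * d" unfolding mu_def d_def by simp
  have q: "(mu - real n * u) / (real n * w) = (d - u) / w" unfolding mud using npos w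
    by (simp add: field_simps)
  have iff1: "(d - u) / w < v \<longleftrightarrow> d < u + v * w" using w by (simp add: divide_less_eq algebra_simps)
  have iff2: "v < (d - u) / w \<longleftrightarrow> u + v * w < d" using w by (simp add: less_divide_eq algebra_simps)
  have ud': "u \<noteq> d" "u + v * w \<noteq> d" using ud uvd unfolding d_def by auto
  have f4e: "f4 n mu (\<lambda>_. 1) u v w =
     (if (0 < u \<and> u < d \<and> d < u + v * w) \<or> (d < u \<and> 0 < v) then uvw_kernel n u v w * (exp (- mu) + exp mu)
      else if 0 < u \<and> u < d \<and> 0 < v \<and> u + v * w < d then uvw_kernel n u v w * exp (- mu) else 0)"
    unfolding f4_def Let_def f4_one_eq_kernel[OF n] mu_n q iff1 iff2 using w by simp
  have A: "\<mu>2 \<le> \<mu>1 + \<sigma> * u + \<sigma> * v * w \<longleftrightarrow> (\<mu>2 - \<mu>1) / \<sigma> \<le> u + v * w"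
    using \<sigma> by (simp add: divide_le_eq algebra_simps)
  have B: "\<mu>1 \<le> \<mu>2 + \<sigma> * u + \<sigma> * v * w \<longleftrightarrow> (\<mu>1 - \<mu>2) / \<sigma> \<le> u + v * w"
    using \<sigma> by (simp add: divide_le_eq algebra_simps)
  have vw: "v * w > 0" using v w by simp
  show ?thesis
  proof (cases "\<mu>1 \<le> \<mu>2")
    case True
    have dd: "(\<mu>2 - \<mu>1) / \<sigma> = d" "(\<mu>1 - \<mu>2) / \<sigma> = - d"
      using True \<sigma> unfolding d_def by (auto simp: max_def min_def field_simps)
    have e1: "exp (real n * (\<mu>2 - \<mu>1) / \<sigma>) = exp mu" "exp (real n * (\<mu>1 - \<mu>2) / \<sigma>) = exp (- mu)"
      using dd unfolding mud by (simp_all add: times_divide_eq_right[symmetric])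
    show ?thesis unfolding mu_def[symmetric] f4e A B dd e1
      using u v vw d0 ud' by (auto simp: algebra_simps)
  next
    case False
    have dd: "(\<mu>1 - \<mu>2) / \<sigma> = d" "(\<mu>2 - \<mu>1) / \<sigma> = - d"
      using False \<sigma> unfolding d_def by (auto simp: max_def min_def field_simps)
    have e1: "exp (real n * (\<mu>1 - \<mu>2) / \<sigma>) = exp mu" "exp (real n * (\<mu>2 - \<mu>1) / \<sigma>) = exp (- mu)"
      using dd unfolding mud by (simp_all add: times_divide_eq_right[symmetric])
    show ?thesis unfolding mu_def[symmetric] f4e A B dd e1
      using u v vw d0 ud' by (auto simp: algebra_simps)
  qed
qed

lemma f4_eq_0_if_negative:
  assumes "u < 0 \<or> v < 0 \<or> w < 0" and \<sigma>: "0 < \<sigma>" and n: "n \<ge> 2"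
  shows "f4 n (real n * (max \<mu>1 \<mu>2 - min \<mu>1 \<mu>2) / \<sigma>) f u v w = 0"
proof -
  have npos: "real n > 0" using n by simp
  have "real n * (max \<mu>1 \<mu>2 - min \<mu>1 \<mu>2) / \<sigma> / real n \<ge> 0" using \<sigma> npos by simp
  moreover have "w > 0 \<Longrightarrow> 0 < u \<Longrightarrow> u < real n * (max \<mu>1 \<mu>2 - min \<mu>1 \<mu>2) / \<sigma> / real n \<Longrightarrow>
     (real n * (max \<mu>1 \<mu>2 - min \<mu>1 \<mu>2) / \<sigma> - real n * u) / (real n * w) > 0"
    using npos \<sigma> by (simp add: field_simps)
  ultimately show ?thesis using assms(1) unfolding f4_def Let_def
    by (auto simp: not_less)
qed

lemma uvw_branches_sum:
  fixes \<phi> :: "(real \<times> real) \<times> real \<Rightarrow> ennreal"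
  assumes \<sigma>: "0 < \<sigma>" and n: "n \<ge> 2" and u0: "u \<noteq> 0" and ud: "u \<noteq> (max \<mu>1 \<mu>2 - min \<mu>1 \<mu>2) / \<sigma>"
    and v0: "v \<noteq> 0" and w0: "w \<noteq> 0" and wd: "w \<noteq> ((max \<mu>1 \<mu>2 - min \<mu>1 \<mu>2) / \<sigma> - u) / v"
  shows "ennreal (\<sigma> ^ 3 * v) * indicator {0<..} v *
     (ennreal (erlang_density (2 * n - 3) (1 / \<sigma>) (\<sigma> * v) * exponential_density (real n * (1 / \<sigma>)) ((\<mu>1 + \<sigma> * u) - \<mu>1) *
        exponential_density (real n * (1 / \<sigma>)) ((\<mu>1 + \<sigma> * u + \<sigma> * v * w) - \<mu>2)) *
      indicator {\<mu>1 + \<sigma> * u..} (\<mu>1 + \<sigma> * u + \<sigma> * v * w) *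
      \<phi> (((\<mu>1 + \<sigma> * u - \<mu>1) / \<sigma>, \<sigma> * v / \<sigma>), (\<mu>1 + \<sigma> * u + \<sigma> * v * w - (\<mu>1 + \<sigma> * u)) / (\<sigma> * v))) +
   ennreal (\<sigma> ^ 3 * v) * indicator {0<..} v *
     (ennreal (erlang_density (2 * n - 3) (1 / \<sigma>) (\<sigma> * v) * exponential_density (real n * (1 / \<sigma>)) ((\<mu>2 + \<sigma> * u) - \<mu>2) *
        exponential_density (real n * (1 / \<sigma>)) ((\<mu>2 + \<sigma> * u + \<sigma> * v * w) - \<mu>1)) *
      indicator {\<mu>2 + \<sigma> * u<..} (\<mu>2 + \<sigma> * u + \<sigma> * v * w) *
      \<phi> (((\<mu>2 + \<sigma> * u - \<mu>2) / \<sigma>, \<sigma> * v / \<sigma>), (\<mu>2 + \<sigma> * u + \<sigma> * v * w - (\<mu>2 + \<sigma> * u)) / (\<sigma> * v))) =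
   ennreal (f4 n (real n * (max \<mu>1 \<mu>2 - min \<mu>1 \<mu>2) / \<sigma>) (\<lambda>_. 1) u v w) * \<phi> ((u, v), w)"
proof -
  let ?\<rho> = "real n * (1 / \<sigma>)"
  consider "v < 0" | "v > 0 \<and> u < 0" | "v > 0 \<and> u > 0 \<and> w < 0" | "v > 0 \<and> u > 0 \<and> w > 0"
    using u0 v0 w0 by fastforce
  then show ?thesis
  proof cases
    case 1
    then show ?thesis using f4_eq_0_if_negative[of u v w \<sigma> n \<mu>1 \<mu>2 "\<lambda>_. 1"] \<sigma> n by simp
  next
    case 2
    then have "\<sigma> * u < 0" using \<sigma> by (simp add: mult_pos_neg)
    then have "exponential_density ?\<rho> ((\<mu>1 + \<sigma> * u) - \<mu>1) = 0" "exponential_density ?\<rho> ((\<mu>2 + \<sigma> * u) - \<mu>2) = 0"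
      by (auto simp: exponential_density_def)
    then show ?thesis using 2 f4_eq_0_if_negative[of u v w \<sigma> n \<mu>1 \<mu>2 "\<lambda>_. 1"] \<sigma> n by simp
  next
    case 3
    then have "\<sigma> * v * w < 0" using \<sigma> by (simp add: mult_pos_neg)
    then show ?thesis using 3 f4_eq_0_if_negative[of u v w \<sigma> n \<mu>1 \<mu>2 "\<lambda>_. 1"] \<sigma> n by (simp add: indicator_def)
  next
    case 4
    then have u: "u > 0" and v: "v > 0" and w: "w > 0"
      by auto
    have "0 < \<sigma> * v * w"
      using \<sigma> v w by simp
    then have I: "\<mu>1 + \<sigma> * u + \<sigma> * v * w \<in> {\<mu>1 + \<sigma> * u..}" "\<mu>2 + \<sigma> * u + \<sigma> * v * w \<in> {\<mu>2 + \<sigma> * u<..}"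
      by auto
    have uvd: "u + v * w \<noteq> (max \<mu>1 \<mu>2 - min \<mu>1 \<mu>2) / \<sigma>"
    proof
      assume "u + v * w = (max \<mu>1 \<mu>2 - min \<mu>1 \<mu>2) / \<sigma>"
      then have "w = ((max \<mu>1 \<mu>2 - min \<mu>1 \<mu>2) / \<sigma> - u) / v"
        using v by (simp add: field_simps)
      then show False
        using wd by simp
    qed
    have sum: "ennreal (if \<mu>2 \<le> \<mu>1 + \<sigma> * u + \<sigma> * v * w then uvw_kernel n u v w * exp (real n * (\<mu>2 - \<mu>1) / \<sigma>) else 0) +
        ennreal (if \<mu>1 \<le> \<mu>2 + \<sigma> * u + \<sigma> * v * w then uvw_kernel n u v w * exp (real n * (\<mu>1 - \<mu>2) / \<sigma>) else 0) =
      ennreal (f4 n (real n * (max \<mu>1 \<mu>2 - min \<mu>1 \<mu>2) / \<sigma>) (\<lambda>_. 1) u v w)"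
      unfolding f4_one_eq_branches[OF \<sigma> n u v w ud uvd] using uvw_kernel_nonneg[OF v, of n u w]
      by (subst ennreal_plus[symmetric]) (auto simp: distrib_left)
    show ?thesis
      unfolding uvw_branch_value[OF \<sigma> n u v w I(1)] uvw_branch_value[OF \<sigma> n u v w I(2)]
        distrib_right[symmetric] sum ..
  qed
qed

text \<open>The map \<open>(X\<^sub>1, X\<^sub>2, S) \<mapsto> ((U\<^sub>1, V), W)\<close>.\<close>

definition uvw_statistic :: "real \<Rightarrow> real \<Rightarrow> real \<Rightarrow> real \<Rightarrow> real \<Rightarrow> real \<Rightarrow> (real \<times> real) \<times> real" where
  "uvw_statistic \<mu>1 \<mu>2 \<sigma> m1 m2 s = (((min m1 m2 - (if m1 \<le> m2 then \<mu>1 else \<mu>2)) / \<sigma>, s / \<sigma>),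
     (max m1 m2 - min m1 m2) / s)"

lemma uvw_statistic_measurable[measurable (raw)]:
  assumes [measurable]: "f \<in> borel_measurable M" "g \<in> borel_measurable M" "h \<in> borel_measurable M"
  shows "(\<lambda>x. uvw_statistic \<mu>1 \<mu>2 \<sigma> (f x) (g x) (h x)) \<in> borel_measurable M"
  unfolding uvw_statistic_def by measurable

text \<open>With \<open>f1\<close> replaced by \<open>1\<close>, \<open>f4\<close> is the joint density of \<open>(U\<^sub>1, V, W)\<close>.\<close>

lemma nn_integral_uvw_statistic:
  fixes \<phi> :: "(real \<times> real) \<times> real \<Rightarrow> ennreal"
  assumes \<sigma>: "0 < \<sigma>" and n: "n \<ge> 2" and [measurable]: "\<phi> \<in> borel_measurable borel"
  shows "(\<integral>\<^sup>+m1. \<integral>\<^sup>+m2. \<integral>\<^sup>+s. ennreal (exponential_density (real n * (1 / \<sigma>)) (m1 - \<mu>1) *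
        exponential_density (real n * (1 / \<sigma>)) (m2 - \<mu>2) * erlang_density (2 * n - 3) (1 / \<sigma>) s) *
        \<phi> (uvw_statistic \<mu>1 \<mu>2 \<sigma> m1 m2 s) \<partial>lborel \<partial>lborel \<partial>lborel) =
    (\<integral>\<^sup>+z. ennreal (f4 n (real n * (max \<mu>1 \<mu>2 - min \<mu>1 \<mu>2) / \<sigma>) (\<lambda>_. 1) (fst (fst z)) (snd (fst z)) (snd z)) * \<phi> z \<partial>lborel)"
proof -
  define d1 where "d1 = (\<lambda>x. exponential_density (real n * (1 / \<sigma>)) (x - \<mu>1))"
  define d2 where "d2 = (\<lambda>x. exponential_density (real n * (1 / \<sigma>)) (x - \<mu>2))"
  define e where "e = erlang_density (2 * n - 3) (1 / \<sigma>)"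
  define f where "f = (\<lambda>u v w. f4 n (real n * (max \<mu>1 \<mu>2 - min \<mu>1 \<mu>2) / \<sigma>) (\<lambda>_. 1) u v w)"
  have [measurable]: "d1 \<in> borel_measurable borel" "d2 \<in> borel_measurable borel" "e \<in> borel_measurable borel"
    unfolding d1_def d2_def e_def by measurable
  define F1 where "F1 = (\<lambda>(s, ma, mb). ennreal (e s * d1 ma * d2 mb) * indicator {ma..} mb *
    \<phi> (((ma - \<mu>1) / \<sigma>, s / \<sigma>), (mb - ma) / s))"
  define F2 where "F2 = (\<lambda>(s, ma, mb). ennreal (e s * d2 ma * d1 mb) * indicator {ma<..} mb *
    \<phi> (((ma - \<mu>2) / \<sigma>, s / \<sigma>), (mb - ma) / s))"
  have F_measurable[measurable]: "F1 \<in> borel_measurable (borel \<Otimes>\<^sub>M borel \<Otimes>\<^sub>M borel)"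
    "F2 \<in> borel_measurable (borel \<Otimes>\<^sub>M borel \<Otimes>\<^sub>M borel)"
    unfolding F1_def F2_def by measurable
  have split: "ennreal (d1 m1 * d2 m2 * e s) * \<phi> (uvw_statistic \<mu>1 \<mu>2 \<sigma> m1 m2 s) =
    indicator {0<..} s * F1 (s, m1, m2) + indicator {0<..} s * F2 (s, m2, m1)" for m1 m2 s
  proof (cases "s > 0")
    case False
    then have "e s = 0"
      unfolding e_def using n by (intro erlang_density_nonpos) auto
    then show ?thesis
      using False by simp
  qed (auto simp: F1_def F2_def uvw_statistic_def mult_ac)
  have "(\<integral>\<^sup>+m1. \<integral>\<^sup>+m2. \<integral>\<^sup>+s. ennreal (d1 m1 * d2 m2 * e s) * \<phi> (uvw_statistic \<mu>1 \<mu>2 \<sigma> m1 m2 s)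
      \<partial>lborel \<partial>lborel \<partial>lborel) =
    (\<integral>\<^sup>+m1. \<integral>\<^sup>+m2. \<integral>\<^sup>+s. indicator {0<..} s * F1 (s, m1, m2) \<partial>lborel \<partial>lborel \<partial>lborel) +
    (\<integral>\<^sup>+m1. \<integral>\<^sup>+m2. \<integral>\<^sup>+s. indicator {0<..} s * F2 (s, m2, m1) \<partial>lborel \<partial>lborel \<partial>lborel)"
    unfolding split
    using nn_integral_add_3[of "\<lambda>(m1, m2, s). indicator {0<..} s * F1 (s, m1, m2)"
        "\<lambda>(m1, m2, s). indicator {0<..} s * F2 (s, m2, m1)"]
    by simp
  also have "(\<integral>\<^sup>+m1. \<integral>\<^sup>+m2. \<integral>\<^sup>+s. indicator {0<..} s * F2 (s, m2, m1) \<partial>lborel \<partial>lborel \<partial>lborel) =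
    (\<integral>\<^sup>+m2. \<integral>\<^sup>+m1. \<integral>\<^sup>+s. indicator {0<..} s * F2 (s, m2, m1) \<partial>lborel \<partial>lborel \<partial>lborel)"
    by (rule lborel_pair.Fubini') measurable
  also have "(\<integral>\<^sup>+m1. \<integral>\<^sup>+m2. \<integral>\<^sup>+s. indicator {0<..} s * F1 (s, m1, m2) \<partial>lborel \<partial>lborel \<partial>lborel) +
      (\<integral>\<^sup>+m2. \<integral>\<^sup>+m1. \<integral>\<^sup>+s. indicator {0<..} s * F2 (s, m2, m1) \<partial>lborel \<partial>lborel \<partial>lborel) =
    (\<integral>\<^sup>+u. \<integral>\<^sup>+v. \<integral>\<^sup>+w. ennreal (\<sigma> ^ 3 * v) * indicator {0<..} v * F1 (\<sigma> * v, \<mu>1 + \<sigma> * u, \<mu>1 + \<sigma> * u + \<sigma> * v * w) +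
      ennreal (\<sigma> ^ 3 * v) * indicator {0<..} v * F2 (\<sigma> * v, \<mu>2 + \<sigma> * u, \<mu>2 + \<sigma> * u + \<sigma> * v * w)
      \<partial>lborel \<partial>lborel \<partial>lborel)"
    unfolding nn_integral_scale_shift_substitution[OF \<sigma> F_measurable(1), of \<mu>1]
      nn_integral_scale_shift_substitution[OF \<sigma> F_measurable(2), of \<mu>2]
    using nn_integral_add_3[of "\<lambda>(u, v, w). ennreal (\<sigma> ^ 3 * v) * indicator {0<..} v * F1 (\<sigma> * v, \<mu>1 + \<sigma> * u, \<mu>1 + \<sigma> * u + \<sigma> * v * w)"
        "\<lambda>(u, v, w). ennreal (\<sigma> ^ 3 * v) * indicator {0<..} v * F2 (\<sigma> * v, \<mu>2 + \<sigma> * u, \<mu>2 + \<sigma> * u + \<sigma> * v * w)"]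
    by simp
  also have "\<dots> = (\<integral>\<^sup>+u. \<integral>\<^sup>+v. \<integral>\<^sup>+w. ennreal (f u v w) * \<phi> ((u, v), w) \<partial>lborel \<partial>lborel \<partial>lborel)"
  proof (rule nn_integral_cong_AE_3)
    let ?d = "(max \<mu>1 \<mu>2 - min \<mu>1 \<mu>2) / \<sigma>"
    show "AE u in lborel. AE v in lborel. AE w in lborel.
      ennreal (\<sigma> ^ 3 * v) * indicator {0<..} v * F1 (\<sigma> * v, \<mu>1 + \<sigma> * u, \<mu>1 + \<sigma> * u + \<sigma> * v * w) +
      ennreal (\<sigma> ^ 3 * v) * indicator {0<..} v * F2 (\<sigma> * v, \<mu>2 + \<sigma> * u, \<mu>2 + \<sigma> * u + \<sigma> * v * w) =
      ennreal (f u v w) * \<phi> ((u, v), w)"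
      using AE_lborel_singleton[of 0] AE_lborel_singleton[of ?d]
    proof eventually_elim
      case u: (elim u)
      show ?case
        using AE_lborel_singleton[of 0]
      proof eventually_elim
        case v: (elim v)
        show ?case
          using AE_lborel_singleton[of 0] AE_lborel_singleton[of "(?d - u) / v"]
        proof eventually_elim
          case (elim w)
          then show ?case
            unfolding F1_def F2_def d1_def d2_def e_def f_def prod.case
            using u v by (intro uvw_branches_sum[OF \<sigma> n]) auto
        qed
      qed
    qed
  qed
  also have "\<dots> = (\<integral>\<^sup>+z. ennreal (f (fst (fst z)) (snd (fst z)) (snd z)) * \<phi> z \<partial>lborel)"
  proof (rule nn_integral_lborel_triple[symmetric, where f = "\<lambda>z. ennreal (f (fst (fst z)) (snd (fst z)) (snd z)) * \<phi> z",
        simplified])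
    have [measurable]: "\<phi> \<in> borel_measurable ((borel \<Otimes>\<^sub>M borel) \<Otimes>\<^sub>M borel)"
      by (simp add: borel_prod)
    have "(\<lambda>z. ennreal (f (fst (fst z)) (snd (fst z)) (snd z)) * \<phi> z) \<in> borel_measurable ((borel \<Otimes>\<^sub>M borel) \<Otimes>\<^sub>M borel)"
      unfolding f_def f4_def Let_def by measurable
    then show "(\<lambda>z. ennreal (f (fst (fst z)) (snd (fst z)) (snd z)) * \<phi> z) \<in> borel_measurable borel"
      by (simp add: borel_prod)
  qed
  finally show ?thesis
    unfolding d1_def d2_def e_def f_def .
qed

lemma nn_integral_uvw_statistic_samples:
  fixes M :: "'a measure" and X :: "nat \<Rightarrow> nat \<Rightarrow> 'a \<Rightarrow> real"
  assumes "prob_space M" and n: "2 \<le> n" and \<sigma>: "0 < \<sigma>"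
    and indep: "prob_space.indep_vars M (\<lambda>_. borel) (\<lambda>(i, j). X i j) ({1, 2} \<times> {1..n})"
    and sample: "\<And>i j. i \<in> {1, 2} \<Longrightarrow> j \<in> {1..n} \<Longrightarrow>
      distributed M lborel (X i j) (\<lambda>x. ennreal (shifted_exp_density (if i = 1 then \<mu>1 else \<mu>2) \<sigma> x))"
    and [measurable]: "\<phi> \<in> borel_measurable borel"
  shows "(\<integral>\<^sup>+\<omega>. \<phi> (uvw_statistic \<mu>1 \<mu>2 \<sigma> (Min ((\<lambda>j. X 1 j \<omega>) ` {1..n})) (Min ((\<lambda>j. X 2 j \<omega>) ` {1..n}))
        (spacing_sum {1..n} (\<lambda>j. X 1 j \<omega>) + spacing_sum {1..n} (\<lambda>j. X 2 j \<omega>))) \<partial>M) =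
    (\<integral>\<^sup>+z. ennreal (f4 n (real n * (max \<mu>1 \<mu>2 - min \<mu>1 \<mu>2) / \<sigma>) (\<lambda>_. 1) (fst (fst z)) (snd (fst z)) (snd z)) *
      \<phi> z \<partial>lborel)"
proof -
  interpret prob_space M
    by fact
  let ?J1 = "{1::nat} \<times> {1..n}" and ?J2 = "{2::nat} \<times> {1..n}"
  let ?d = "\<lambda>p x. ennreal (exponential_density (1 / \<sigma>) (x - (if p \<in> ?J1 then \<mu>1 else \<mu>2)))"
  let ?D = "\<lambda>p. density lborel (?d p)"
  let ?Y = "\<lambda>p :: nat \<times> nat. case p of (i, j) \<Rightarrow> X i j"
  let ?stat = "\<lambda>x. uvw_statistic \<mu>1 \<mu>2 \<sigma> (Min (x ` ?J1)) (Min (x ` ?J2)) (spacing_sum ?J1 x + spacing_sum ?J2 x)"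
  have J: "?J1 \<union> ?J2 = {1, 2} \<times> {1..n}" "?J1 \<inter> ?J2 = {}"
    by auto
  have statistic: "?stat (\<lambda>p\<in>?J1 \<union> ?J2. ?Y p \<omega>) =
    uvw_statistic \<mu>1 \<mu>2 \<sigma> (Min ((\<lambda>j. X 1 j \<omega>) ` {1..n})) (Min ((\<lambda>j. X 2 j \<omega>) ` {1..n}))
      (spacing_sum {1..n} (\<lambda>j. X 1 j \<omega>) + spacing_sum {1..n} (\<lambda>j. X 2 j \<omega>))" for \<omega>
  proof -
    have "(\<lambda>p\<in>?J1 \<union> ?J2. ?Y p \<omega>) ` ({i} \<times> {1..n}) = (\<lambda>j. X i j \<omega>) ` {1..n}" if "i \<in> {1, 2}" for i
      using that by (auto simp: image_iff intro!: bexI[of _ "(i, _)"])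
    moreover have "spacing_sum {1..n} (\<lambda>j. (\<lambda>p\<in>?J1 \<union> ?J2. ?Y p \<omega>) (i, j)) = spacing_sum {1..n} (\<lambda>j. X i j \<omega>)"
      if "i \<in> {1, 2}" for i
      using that unfolding spacing_sum_def
      by (intro sum.cong arg_cong2[where f = "(-)"] arg_cong[where f = Min] image_cong) auto
    ultimately show ?thesis
      by (simp only: spacing_sum_Times_singleton insert_iff simp_thms)
  qed
  have "(\<lambda>x. \<phi> (?stat x)) \<in> borel_measurable (PiM (?J1 \<union> ?J2) ?D)"
  proof -
    have component: "(\<lambda>x. x p) \<in> borel_measurable (PiM (?J1 \<union> ?J2) ?D)" if "p \<in> ?J1 \<union> ?J2" for p
      using measurable_component_singleton[OF that, of ?D] by simp
    show ?thesis
      by (intro measurable_compose[OF _ assms(6)] uvw_statistic_measurable borel_measurable_add borel_measurable_Min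
          borel_measurable_spacing_sum component) auto
  qed
  moreover have sample': "distributed M lborel (?Y p) (?d p)" if "p \<in> ?J1 \<union> ?J2" for p
    using that sample[of "fst p" "snd p"] \<sigma> by (auto simp: shifted_exp_density_eq_exponential_density)
  ultimately have "(\<integral>\<^sup>+\<omega>. \<phi> (?stat (\<lambda>p\<in>?J1 \<union> ?J2. ?Y p \<omega>)) \<partial>M) = (\<integral>\<^sup>+x. \<phi> (?stat x) \<partial>PiM (?J1 \<union> ?J2) ?D)"
    using indep J n by (intro nn_integral_indep_vars_PiM[OF _ _ sample']) auto
  also have "\<dots> = (\<integral>\<^sup>+m1. \<integral>\<^sup>+m2. \<integral>\<^sup>+s. ennreal (exponential_density (real n * (1 / \<sigma>)) (m1 - \<mu>1) *
        exponential_density (real n * (1 / \<sigma>)) (m2 - \<mu>2) * erlang_density (2 * n - 3) (1 / \<sigma>) s) *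
      \<phi> (uvw_statistic \<mu>1 \<mu>2 \<sigma> m1 m2 s) \<partial>lborel \<partial>lborel \<partial>lborel)"
    using nn_integral_two_samples[of ?J1 ?J2 n "1 / \<sigma>" "\<lambda>(m1, m2, s). \<phi> (uvw_statistic \<mu>1 \<mu>2 \<sigma> m1 m2 s)" \<mu>1 \<mu>2]
      n \<sigma> J(2) by (simp add: card_cartesian_product)
  also have "\<dots> = (\<integral>\<^sup>+z. ennreal (f4 n (real n * (max \<mu>1 \<mu>2 - min \<mu>1 \<mu>2) / \<sigma>) (\<lambda>_. 1) (fst (fst z)) (snd (fst z)) (snd z)) *
      \<phi> z \<partial>lborel)"
    by (rule nn_integral_uvw_statistic[OF \<sigma> n assms(6)])
  finally show ?thesis
    by (simp only: statistic)
qed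

lemma distributed_uvw_statistic:
  fixes M :: "'a measure" and X :: "nat \<Rightarrow> nat \<Rightarrow> 'a \<Rightarrow> real"
  assumes "prob_space M" and n: "2 \<le> n" and \<sigma>: "0 < \<sigma>"
    and indep: "prob_space.indep_vars M (\<lambda>_. borel) (\<lambda>(i, j). X i j) ({1, 2} \<times> {1..n})"
    and sample: "\<And>i j. i \<in> {1, 2} \<Longrightarrow> j \<in> {1..n} \<Longrightarrow>
      distributed M lborel (X i j) (\<lambda>x. ennreal (shifted_exp_density (if i = 1 then \<mu>1 else \<mu>2) \<sigma> x))"
  shows "distributed M lborel
      (\<lambda>\<omega>. uvw_statistic \<mu>1 \<mu>2 \<sigma> (Min ((\<lambda>j. X 1 j \<omega>) ` {1..n})) (Min ((\<lambda>j. X 2 j \<omega>) ` {1..n}))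
        (spacing_sum {1..n} (\<lambda>j. X 1 j \<omega>) + spacing_sum {1..n} (\<lambda>j. X 2 j \<omega>)))
      (\<lambda>z. ennreal (f4 n (real n * (max \<mu>1 \<mu>2 - min \<mu>1 \<mu>2) / \<sigma>) (\<lambda>_. 1) (fst (fst z)) (snd (fst z)) (snd z)))"
proof (rule distributedI_nn_integral)
  have "(\<lambda>z. ennreal (f4 n (real n * (max \<mu>1 \<mu>2 - min \<mu>1 \<mu>2) / \<sigma>) (\<lambda>_. 1) (fst (fst z)) (snd (fst z)) (snd z)))
      \<in> borel_measurable ((borel \<Otimes>\<^sub>M borel) \<Otimes>\<^sub>M borel)"
    unfolding f4_def Let_def by measurable
  then show "(\<lambda>z. ennreal (f4 n (real n * (max \<mu>1 \<mu>2 - min \<mu>1 \<mu>2) / \<sigma>) (\<lambda>_. 1) (fst (fst z)) (snd (fst z)) (snd z)))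
      \<in> borel_measurable borel"
    by (simp add: borel_prod)
  have [measurable]: "X i j \<in> borel_measurable M" if "i \<in> {1, 2}" "j \<in> {1..n}" for i j
    using distributed_measurable[OF sample[OF that]] by simp
  show "(\<lambda>\<omega>. uvw_statistic \<mu>1 \<mu>2 \<sigma> (Min ((\<lambda>j. X 1 j \<omega>) ` {1..n})) (Min ((\<lambda>j. X 2 j \<omega>) ` {1..n}))
      (spacing_sum {1..n} (\<lambda>j. X 1 j \<omega>) + spacing_sum {1..n} (\<lambda>j. X 2 j \<omega>))) \<in> borel_measurable M"
    by (intro uvw_statistic_measurable borel_measurable_add borel_measurable_Min borel_measurable_spacing_sum) auto
qed (rule nn_integral_uvw_statistic_samples[OF assms borel_measurable_indicator])

text \<open>\<open>f4\<close> divides by \<open>f1 w\<close>, and division by zero yields zero.\<close>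

lemma f4_mult_eq: "f4 n mu f1 u v w * f1 w = (if f1 w = 0 then 0 else f4 n mu (\<lambda>_. 1) u v w)"
  by (auto simp: f4_def Let_def)

theorem lemma5p2:
  fixes M :: "'a measure" and X :: "nat \<Rightarrow> nat \<Rightarrow> 'a \<Rightarrow> real"
    and n :: nat and \<mu>1 \<mu>2 \<sigma> :: real and f1 :: "real \<Rightarrow> real"
  defines "Xm \<equiv> (\<lambda>i \<omega>. Min ((\<lambda>j. X i j \<omega>) ` {1..n}))"
  defines "S \<equiv> (\<lambda>\<omega>. \<Sum>i\<in>{1,2}. \<Sum>j\<in>{1..n}. X i j \<omega> - Xm i \<omega>)"
  defines "Z1 \<equiv> (\<lambda>\<omega>. min (Xm 1 \<omega>) (Xm 2 \<omega>))"
  defines "Z2 \<equiv> (\<lambda>\<omega>. max (Xm 1 \<omega>) (Xm 2 \<omega>))"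
  defines "W \<equiv> (\<lambda>\<omega>. (Z2 \<omega> - Z1 \<omega>) / S \<omega>)"
  defines "V \<equiv> (\<lambda>\<omega>. S \<omega> / \<sigma>)"
  defines "\<mu>S \<equiv> (\<lambda>\<omega>. (if Xm 1 \<omega> \<le> Xm 2 \<omega> then \<mu>1 else 0) + (if Xm 2 \<omega> < Xm 1 \<omega> then \<mu>2 else 0))"
  defines "U1 \<equiv> (\<lambda>\<omega>. (Z1 \<omega> - \<mu>S \<omega>) / \<sigma>)"
  defines "\<mu> \<equiv> real n * (max \<mu>1 \<mu>2 - min \<mu>1 \<mu>2) / \<sigma>"
  assumes "prob_space M"
    and "n \<ge> 2"
    and "\<sigma> > 0"
    and "prob_space.indep_vars M (\<lambda>_. borel) (\<lambda>(i, j). X i j) ({1, 2} \<times> {1..n})"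
    and "\<And>i j. i \<in> {1, 2} \<Longrightarrow> j \<in> {1..n} \<Longrightarrow>
           distributed M lborel (X i j)
             (\<lambda>x. ennreal (shifted_exp_density (if i = 1 then \<mu>1 else \<mu>2) \<sigma> x))"
    and "\<And>w. f1 w \<ge> 0"
    and "distributed M lborel W (\<lambda>w. ennreal (f1 w))"
  shows "conditional_density M (\<lambda>\<omega>. (U1 \<omega>, V \<omega>)) W f1
           (\<lambda>(u, v) w. f4 n \<mu> f1 u v w)"
proof -
  note prob = assms(10) and n = assms(11) and \<sigma> = assms(12) and indep = assms(13) and sample = assms(14)
    and f1_nonneg = assms(15) and marginal = assms(16)
  have statistic: "(\<lambda>\<omega>. ((U1 \<omega>, V \<omega>), W \<omega>)) = (\<lambda>\<omega>. uvw_statistic \<mu>1 \<mu>2 \<sigma> (Xm 1 \<omega>) (Xm 2 \<omega>)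
      (spacing_sum {1..n} (\<lambda>j. X 1 j \<omega>) + spacing_sum {1..n} (\<lambda>j. X 2 j \<omega>)))"
    by (auto simp: U1_def V_def W_def Z1_def Z2_def \<mu>S_def S_def Xm_def uvw_statistic_def spacing_sum_def)
  have "distributed M lborel (\<lambda>\<omega>. ((U1 \<omega>, V \<omega>), W \<omega>))
      (\<lambda>z. ennreal (f4 n \<mu> (\<lambda>_. 1) (fst (fst z)) (snd (fst z)) (snd z)))"
    unfolding statistic Xm_def \<mu>_def using distributed_uvw_statistic[OF prob n \<sigma> indep sample] .
  from distributed_joint_density_restrict[OF this marginal]
  have "distributed M lborel (\<lambda>\<omega>. ((U1 \<omega>, V \<omega>), W \<omega>))
      (\<lambda>z. if f1 (snd z) = 0 then 0 else ennreal (f4 n \<mu> (\<lambda>_. 1) (fst (fst z)) (snd (fst z)) (snd z)))"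
    using f1_nonneg by simp
  moreover have "(\<lambda>(y, w). ennreal ((\<lambda>(u, v) w. f4 n \<mu> f1 u v w) y w * f1 w)) =
      (\<lambda>z. if f1 (snd z) = 0 then 0 else ennreal (f4 n \<mu> (\<lambda>_. 1) (fst (fst z)) (snd (fst z)) (snd z)))"
    by (auto simp: fun_eq_iff f4_mult_eq)
  ultimately show ?thesis
    unfolding conditional_density_def by simp
qed

end
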